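(* Let $A$ be a unital pro-$C^*$-algebra, $H$ a Hilbert space, and let $CP^n_\infty(A,L(H),I)$ be the set of completely $n$-positive linear maps $\theta=[\theta_{ij}]_{i,j=1}^n$ from $A$ to $L(H)$ with $\theta_{ii}(1)=I_H$ for $1\le i\le n$ and $\theta_{ij}(1)=0$ for $1\le i<j\le n$. Let $\rho\in CP^n_\infty(A,L(H),I)$ with Stinespring representation $(\Phi_\rho,H_\rho,V_{\rho,1},\dots,V_{\rho,n})$, and let $P_{H_0}$ be the projection of $H_\rho$ onto the closed subspace $H_0$ generated by $\{V_{\rho,i}\xi:\xi\in H,1\le i\le n\}$. Then $\rho$ is an extreme point of $CP^n_\infty(A,L(H),I)$ if and only if the map $T\mapsto P_{H_0}TP_{H_0}$ from $\Phi_\rho(A)'$ to $L(H_\rho)$ is injective.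
   Context: A pro-$C^*$-algebra is a complete Hausdorff topological $*$-algebra over $\mathbb{C}$ whose topology is determined by its continuous $C^*$-seminorms. A representation of $A$ on a Hilbert space $K$ is a continuous $*$-morphism $A\to L(K)$. An $n\times n$ matrix $[\rho_{ij}]$ of continuous linear maps $A\to L(H)$ is completely $n$-positive if the map $M_n(A)\to M_n(L(H))$, $[a_{ij}]\mapsto[\rho_{ij}(a_{ij})]$, is completely positive. The Stinespring representation of $\rho$ consists of a representation $\Phi_\rho$ of $A$ on a Hilbert space $H_\rho$ and $V_{\rho,1},\dots,V_{\rho,n}\in L(H,H_\rho)$ with $\rho_{ij}(a)=V_{\rho,i}^*\Phi_\rho(a)V_{\rho,j}$ for all $a,i,j$ and $\{\Phi_\rho(a)V_{\rho,i}\xi:a\in A,\xi\in H,1\le i\le n\}$ spanning a dense subspace of $H_\rho$; it exists and is unique up to unitary equivalence. $\Phi_\rho(A)'$ is the commutant of $\Phi_\rho(A)$ in $L(H_\rho)$. *)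

theory Defs
  imports "HOL-Analysis.Analysis"
begin

class complex_vector_space = ab_group_add +
  fixes scaleC :: "complex \<Rightarrow> 'a \<Rightarrow> 'a" (infixr "*\<^sub>C" 75)
  assumes scaleC_add_right: "c *\<^sub>C (x + y) = c *\<^sub>C x + c *\<^sub>C y"
    and scaleC_add_left: "(c + d) *\<^sub>C x = c *\<^sub>C x + d *\<^sub>C x"
    and scaleC_scaleC: "c *\<^sub>C (d *\<^sub>C x) = (c * d) *\<^sub>C x"
    and scaleC_one: "1 *\<^sub>C x = x"

class complex_inner = real_normed_vector + complex_vector_space +
  fixes cinner :: "'a \<Rightarrow> 'a \<Rightarrow> complex"
  assumes scaleR_scaleC: "scaleR r x = complex_of_real r *\<^sub>C x"
    and cinner_cnj: "cinner x y = cnj (cinner y x)"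
    and cinner_add_left: "cinner (x + y) z = cinner x z + cinner y z"
    and cinner_scaleC_left: "cinner (c *\<^sub>C x) y = c * cinner x y"
    and cinner_self_real: "Im (cinner x x) = 0"
    and cinner_self_nonneg: "0 \<le> Re (cinner x x)"
    and cinner_self_eq_zero: "cinner x x = 0 \<longleftrightarrow> x = 0"
    and norm_eq_sqrt_cinner: "norm x = sqrt (Re (cinner x x))"

class chilbert_space = complex_inner + complete_space

definition clinear :: "('a::complex_vector_space \<Rightarrow> 'b::complex_vector_space) \<Rightarrow> bool" where
  "clinear f \<longleftrightarrow> (\<forall>x y. f (x + y) = f x + f y) \<and> (\<forall>c x. f (c *\<^sub>C x) = c *\<^sub>C f x)"

definition bounded_clinear :: "('a::complex_inner \<Rightarrow> 'b::complex_inner) \<Rightarrow> bool" where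
  "bounded_clinear f \<longleftrightarrow> clinear f \<and> (\<exists>K. \<forall>x. norm (f x) \<le> norm x * K)"

definition cadjoint :: "('a::complex_inner \<Rightarrow> 'b::complex_inner) \<Rightarrow> ('b \<Rightarrow> 'a)" where
  "cadjoint T = (THE S. \<forall>x y. cinner (T x) y = cinner x (S y))"

definition cspan :: "'a::complex_vector_space set \<Rightarrow> 'a set" where
  "cspan S = {x. \<exists>F c. finite F \<and> F \<subseteq> S \<and> x = (\<Sum>v\<in>F. c v *\<^sub>C v)}"

definition orth_proj :: "'a::complex_inner set \<Rightarrow> 'a \<Rightarrow> 'a" where
  "orth_proj M x = (THE y. y \<in> M \<and> (\<forall>z\<in>M. cinner (x - y) z = 0))"

definition opnorm_topology :: "('a::complex_inner \<Rightarrow> 'b::complex_inner) topology" where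
  "opnorm_topology = subtopology
     (topology_generated_by {{T. onorm (\<lambda>x. T x - T0 x) < r} | T0 r. bounded_clinear T0})
     (Collect bounded_clinear)"

text \<open>Unital complex *-algebras (the unit is 1; 1 = 0 is not excluded).\<close>
class complex_star_algebra = ring + monoid_mult + complex_vector_space +
  fixes astar :: "'a \<Rightarrow> 'a"
  assumes scaleC_mult_left: "(c *\<^sub>C x) * y = c *\<^sub>C (x * y)"
    and scaleC_mult_right: "x * (c *\<^sub>C y) = c *\<^sub>C (x * y)"
    and astar_astar: "astar (astar x) = x"
    and astar_add: "astar (x + y) = astar x + astar y"
    and astar_scaleC: "astar (c *\<^sub>C x) = cnj c *\<^sub>C astar x"
    and astar_mult: "astar (x * y) = astar y * astar x"

definition cstar_seminorm :: "('a::complex_star_algebra \<Rightarrow> real) \<Rightarrow> bool" where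
  "cstar_seminorm p \<longleftrightarrow>
     (\<forall>x y. p (x + y) \<le> p x + p y) \<and> (\<forall>c x. p (c *\<^sub>C x) = cmod c * p x) \<and>
     (\<forall>x y. p (x * y) \<le> p x * p y) \<and> (\<forall>x. p (astar x * x) = (p x)\<^sup>2)"

definition seminorm_topology :: "('a::complex_star_algebra \<Rightarrow> real) set \<Rightarrow> 'a topology" where
  "seminorm_topology S = topology_generated_by {{b. p (b - a) < r} | p a r. p \<in> S}"

definition seminorm_complete :: "('a::complex_star_algebra \<Rightarrow> real) set \<Rightarrow> bool" where
  "seminorm_complete S \<longleftrightarrow>
     (\<forall>F. F \<noteq> bot \<and> (\<forall>p\<in>S. \<forall>e>0. \<forall>\<^sub>F (x, y) in F \<times>\<^sub>F F. p (x - y) < e) \<longrightarrow>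
        (\<exists>a. \<forall>p\<in>S. \<forall>e>0. \<forall>\<^sub>F x in F. p (x - a) < e))"

definition pro_cstar_algebra :: "('a::complex_star_algebra \<Rightarrow> real) set \<Rightarrow> bool" where
  "pro_cstar_algebra S \<longleftrightarrow> (\<forall>p\<in>S. cstar_seminorm p) \<and>
     Hausdorff_space (seminorm_topology S) \<and> seminorm_complete S"

definition continuous_op_map ::
  "('a::complex_star_algebra \<Rightarrow> real) set \<Rightarrow> ('a \<Rightarrow> ('h::complex_inner \<Rightarrow> 'k::complex_inner)) \<Rightarrow> bool" where
  "continuous_op_map S f \<longleftrightarrow>
     (\<forall>a b. f (a + b) = (\<lambda>x. f a x + f b x)) \<and> (\<forall>c a. f (c *\<^sub>C a) = (\<lambda>x. c *\<^sub>C f a x)) \<and> continuous_map (seminorm_topology S) opnorm_topology f"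

definition representation ::
  "('a::complex_star_algebra \<Rightarrow> real) set \<Rightarrow> ('a \<Rightarrow> ('k::complex_inner \<Rightarrow> 'k)) \<Rightarrow> bool" where
  "representation S \<Phi> \<longleftrightarrow> continuous_op_map S \<Phi> \<and>
     (\<forall>a b. \<Phi> (a * b) = \<Phi> a \<circ> \<Phi> b) \<and> (\<forall>a. \<Phi> (astar a) = cadjoint (\<Phi> a))"

definition pos_matrix :: "'i set \<Rightarrow> ('i \<Rightarrow> 'i \<Rightarrow> 'a::complex_star_algebra) \<Rightarrow> bool" where
  "pos_matrix I X \<longleftrightarrow> (\<exists>B. \<forall>i\<in>I. \<forall>j\<in>I. X i j = (\<Sum>l\<in>I. astar (B l i) * B l j))"

text \<open>An operator matrix indexed by I is positive as an operator on the direct sum H^I.\<close>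
definition pos_op_matrix :: "'i set \<Rightarrow> ('i \<Rightarrow> 'i \<Rightarrow> ('h::complex_inner \<Rightarrow> 'h)) \<Rightarrow> bool" where
  "pos_op_matrix I T \<longleftrightarrow> (\<forall>\<xi>. let s = (\<Sum>i\<in>I. \<Sum>j\<in>I. cinner (T i j (\<xi> j)) (\<xi> i))
                               in Im s = 0 \<and> 0 \<le> Re s)"

text \<open>An n x n matrix of continuous linear maps A \<rightarrow> L(H) is completely n-positive
  if [a_ij] \<mapsto> [rho_ij(a_ij)] is completely positive, i.e. all its amplifications
  to M_m(M_n(A)) (indexed by {..<m} \<times> {..<n}) are positive.\<close>
definition completely_n_positive ::
  "('a::complex_star_algebra \<Rightarrow> real) set \<Rightarrow> nat \<Rightarrow> (nat \<Rightarrow> nat \<Rightarrow> 'a \<Rightarrow> ('h::complex_inner \<Rightarrow> 'h)) \<Rightarrow> bool" where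
  "completely_n_positive S n \<rho> \<longleftrightarrow>
     (\<forall>i<n. \<forall>j<n. continuous_op_map S (\<rho> i j)) \<and>
     (\<forall>(m::nat) X. pos_matrix ({..<m} \<times> {..<n}) X \<longrightarrow>
        pos_op_matrix ({..<m} \<times> {..<n}) (\<lambda>p q. \<rho> (snd p) (snd q) (X p q)))"

text \<open>CP^n_\<infinity>(A, L(H), I). Matrices are represented as nat-indexed families that
  vanish outside {..<n} \<times> {..<n}.\<close>
definition CPn_I ::
  "('a::complex_star_algebra \<Rightarrow> real) set \<Rightarrow> nat \<Rightarrow> (nat \<Rightarrow> nat \<Rightarrow> 'a \<Rightarrow> ('h::complex_inner \<Rightarrow> 'h)) set" where
  "CPn_I S n = {\<theta>. completely_n_positive S n \<theta> \<and>
      (\<forall>i j. (n \<le> i \<or> n \<le> j) \<longrightarrow> \<theta> i j = (\<lambda>a x. 0)) \<and>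
      (\<forall>i<n. \<theta> i i 1 = id) \<and> (\<forall>i j. i < j \<and> j < n \<longrightarrow> \<theta> i j 1 = (\<lambda>x. 0))}"

definition is_extreme_point :: "('b \<Rightarrow> 'c \<Rightarrow> 'a \<Rightarrow> ('h::real_vector \<Rightarrow> 'h)) set \<Rightarrow> ('b \<Rightarrow> 'c \<Rightarrow> 'a \<Rightarrow> ('h \<Rightarrow> 'h)) \<Rightarrow> bool" where
  "is_extreme_point K \<rho> \<longleftrightarrow> \<rho> \<in> K \<and>
     (\<forall>\<theta> \<theta>' t. \<theta> \<in> K \<and> \<theta>' \<in> K \<and> 0 < t \<and> t < 1 \<and>
        \<rho> = (\<lambda>i j a x. t *\<^sub>R \<theta> i j a x + (1 - t) *\<^sub>R \<theta>' i j a x) \<longrightarrow> \<theta> = \<rho> \<and> \<theta>' = \<rho>)"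

definition stinespring_rep ::
  "('a::complex_star_algebra \<Rightarrow> real) set \<Rightarrow> nat \<Rightarrow> (nat \<Rightarrow> nat \<Rightarrow> 'a \<Rightarrow> ('h::complex_inner \<Rightarrow> 'h))
   \<Rightarrow> ('a \<Rightarrow> ('k::complex_inner \<Rightarrow> 'k)) \<Rightarrow> (nat \<Rightarrow> 'h \<Rightarrow> 'k) \<Rightarrow> bool" where
  "stinespring_rep S n \<rho> \<Phi> V \<longleftrightarrow> representation S \<Phi> \<and>
     (\<forall>i<n. bounded_clinear (V i)) \<and>
     (\<forall>i<n. \<forall>j<n. \<forall>a. \<rho> i j a = cadjoint (V i) \<circ> \<Phi> a \<circ> V j) \<and>
     closure (cspan {\<Phi> a (V i \<xi>) | a i \<xi>. i < n}) = UNIV"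

definition commutant :: "('a \<Rightarrow> ('k::complex_inner \<Rightarrow> 'k)) \<Rightarrow> ('k \<Rightarrow> 'k) set" where
  "commutant \<Phi> = {T. bounded_clinear T \<and> (\<forall>a. T \<circ> \<Phi> a = \<Phi> a \<circ> T)}"

end

theory Submission
  imports Defs
begin

text \<open>Let \<open>P\<close> be the projection onto \<open>H0\<close>, the closed span of the ranges of the \<open>V i\<close>.
  If \<open>\<rho> = t \<theta> + (1 - t) \<theta>'\<close> with \<open>\<theta>, \<theta>'\<close> in \<open>CP\<^sup>n(A, L(H), I)\<close>, then \<open>t \<theta> \<le> \<rho>\<close>, and a
  Radon-Nikodym argument (a bounded form on the dense span of the \<open>\<Phi> a (V i \<xi>)\<close>) yields a
  self-adjoint \<open>T\<close> in the commutant of \<open>\<Phi>\<close> with \<open>\<theta> i j a = V\<^sub>i\<^sup>* \<Phi> a T V\<^sub>j\<close>. The normalisation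
  \<open>\<theta> i i 1 = id\<close>, \<open>\<theta> i j 1 = 0\<close> (\<open>i < j\<close>) forces \<open>P T P = P\<close>, so injectivity of \<open>T \<mapsto> P T P\<close>
  gives \<open>T = id\<close> and \<open>\<theta> = \<rho>\<close>. Conversely, two distinct elements of the commutant with the same
  compression produce a nonzero self-adjoint \<open>A\<close> in the commutant with \<open>V\<^sub>i\<^sup>* A V\<^sub>j = 0\<close>; then
  \<open>V\<^sub>i\<^sup>* \<Phi> a (1 \<plusminus> e A) V\<^sub>j\<close> are, for small \<open>e > 0\<close>, two distinct elements of \<open>CP\<^sup>n(A, L(H), I)\<close>
  with midpoint \<open>\<rho>\<close>.\<close>

section \<open>Complex inner product spaces\<close>

lemma scaleC_zero_right [simp]: "c *\<^sub>C 0 = 0"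
proof -
  have "c *\<^sub>C 0 + c *\<^sub>C 0 = c *\<^sub>C 0 + 0" by (simp flip: scaleC_add_right)
  then show ?thesis by (rule add_left_imp_eq)
qed

lemma scaleC_zero_left [simp]: "0 *\<^sub>C x = 0"
proof -
  have "0 *\<^sub>C x + 0 *\<^sub>C x = 0 *\<^sub>C x + 0" by (simp flip: scaleC_add_left)
  then show ?thesis by (rule add_left_imp_eq)
qed

lemma scaleC_minus_right: "c *\<^sub>C (- x) = - (c *\<^sub>C x)"
proof -
  have "c *\<^sub>C (- x) + c *\<^sub>C x = 0" by (simp flip: scaleC_add_right)
  then show ?thesis by (simp add: eq_neg_iff_add_eq_0)
qed

lemma scaleC_minus_left: "(- c) *\<^sub>C x = - (c *\<^sub>C x)"
proof -
  have "(- c) *\<^sub>C x + c *\<^sub>C x = 0" by (simp flip: scaleC_add_left)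
  then show ?thesis by (simp add: eq_neg_iff_add_eq_0)
qed

lemma scaleC_minus_one: "(- 1) *\<^sub>C x = - x"
  by (simp add: scaleC_minus_left scaleC_one)

lemma scaleC_diff_right: "c *\<^sub>C (x - y) = c *\<^sub>C x - c *\<^sub>C y"
  using scaleC_add_right[of c x "- y"] by (simp add: scaleC_minus_right)

lemma cinner_add_right: "cinner x (y + z) = cinner x y + cinner x z"
  using cinner_cnj[of x "y + z"] cinner_cnj[of y x] cinner_cnj[of z x]
  by (simp add: cinner_add_left)

lemma cinner_scaleC_right: "cinner x (c *\<^sub>C y) = cnj c * cinner x y"
  using cinner_cnj[of x "c *\<^sub>C y"] cinner_cnj[of y x] by (simp add: cinner_scaleC_left)

lemma cinner_zero_left [simp]: "cinner 0 y = 0"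
  using cinner_scaleC_left[of 0 0 y] by simp

lemma cinner_zero_right [simp]: "cinner x 0 = 0"
  using cinner_cnj[of x 0] by simp

lemma cinner_minus_left: "cinner (- x) y = - cinner x y"
  using cinner_scaleC_left[of "- 1" x y] by (simp add: scaleC_minus_one)

lemma cinner_minus_right: "cinner x (- y) = - cinner x y"
  using cinner_scaleC_right[of x "- 1" y] by (simp add: scaleC_minus_one)

lemma cinner_diff_left: "cinner (x - y) z = cinner x z - cinner y z"
  using cinner_add_left[of x "- y" z] by (simp add: cinner_minus_left)

lemma cinner_diff_right: "cinner x (y - z) = cinner x y - cinner x z"
  using cinner_add_right[of x y "- z"] by (simp add: cinner_minus_right)

lemma cinner_sum_left: "cinner (\<Sum>i\<in>A. f i) y = (\<Sum>i\<in>A. cinner (f i) y)"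
  by (induction A rule: infinite_finite_induct) (auto simp: cinner_add_left)

lemma cinner_sum_right: "cinner x (\<Sum>i\<in>A. f i) = (\<Sum>i\<in>A. cinner x (f i))"
  by (induction A rule: infinite_finite_induct) (auto simp: cinner_add_right)

lemma cinner_sum_list_left: "cinner (sum_list (map f xs)) y = (\<Sum>x\<leftarrow>xs. cinner (f x) y)"
  by (induction xs) (simp_all add: cinner_add_left)

lemma cinner_sum_list_right: "cinner y (sum_list (map f xs)) = (\<Sum>x\<leftarrow>xs. cinner y (f x))"
  by (induction xs) (simp_all add: cinner_add_right)

lemma cinner_scaleR_left: "cinner (r *\<^sub>R x) y = complex_of_real r * cinner x y"
  by (simp add: scaleR_scaleC cinner_scaleC_left)

lemma cinner_scaleR_right: "cinner x (r *\<^sub>R y) = complex_of_real r * cinner x y"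
  by (simp add: scaleR_scaleC cinner_scaleC_right)

lemma cinner_self_eq_norm_square: "cinner x x = complex_of_real ((norm x)\<^sup>2)"
  using cinner_self_real[of x] cinner_self_nonneg[of x] norm_eq_sqrt_cinner[of x]
  by (simp add: complex_eq_iff)

lemma cinner_ext_left: "(\<And>z. cinner x z = cinner y z) \<Longrightarrow> x = y"
  using cinner_self_eq_zero[of "x - y"] by (metis cinner_diff_left diff_self eq_iff_diff_eq_0)

lemma cinner_ext_right: "(\<And>z. cinner z x = cinner z y) \<Longrightarrow> x = y"
  using cinner_self_eq_zero[of "x - y"] by (metis cinner_diff_right diff_self eq_iff_diff_eq_0)

lemma power2_norm_eq_Re_cinner: "(norm x)\<^sup>2 = Re (cinner x x)"
  by (simp add: cinner_self_eq_norm_square)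

lemma cinner_cauchy_schwarz: "cmod (cinner x y) \<le> norm x * norm y"
proof (cases "y = 0")
  case True
  then show ?thesis by simp
next
  case False
  define b where "b = cinner x y"
  define N where "N = (norm y)\<^sup>2"
  have N: "N > 0" using False by (simp add: N_def)
  have byx: "cinner y x = cnj b" unfolding b_def by (rule cinner_cnj)
  have yy: "cinner y y = complex_of_real N" unfolding N_def by (rule cinner_self_eq_norm_square)
  have "cinner (complex_of_real N *\<^sub>C x - b *\<^sub>C y) (complex_of_real N *\<^sub>C x - b *\<^sub>C y)
      = complex_of_real N * complex_of_real N * cinner x x - complex_of_real N * cnj b * cinner x y
        - b * complex_of_real N * cinner y x + b * cnj b * cinner y y"
    by (simp add: cinner_diff_left cinner_diff_right cinner_scaleC_left cinner_scaleC_right algebra_simps)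
  also have "\<dots> = complex_of_real N * complex_of_real N * complex_of_real ((norm x)\<^sup>2)
      - complex_of_real N * (b * cnj b)"
    unfolding cinner_self_eq_norm_square[of x] yy byx b_def[symmetric] by (simp add: algebra_simps)
  also have "\<dots> = complex_of_real (N * (N * (norm x)\<^sup>2 - (cmod b)\<^sup>2))"
    by (simp add: complex_norm_square[symmetric] algebra_simps)
  finally have "0 \<le> N * (N * (norm x)\<^sup>2 - (cmod b)\<^sup>2)"
    using cinner_self_nonneg[of "complex_of_real N *\<^sub>C x - b *\<^sub>C y"] by simp
  then have "(cmod b)\<^sup>2 \<le> (norm x * norm y)\<^sup>2"
    using N by (simp add: zero_le_mult_iff N_def power_mult_distrib mult.commute)
  then show ?thesis unfolding b_def by (meson norm_ge_zero power2_le_imp_le zero_le_mult_iff)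
qed

lemma norm_scaleC: "norm (c *\<^sub>C (x::'a::complex_inner)) = cmod c * norm x"
proof -
  have "cinner (c *\<^sub>C x) (c *\<^sub>C x) = (c * cnj c) * cinner x x"
    by (simp add: cinner_scaleC_left cinner_scaleC_right algebra_simps)
  also have "\<dots> = complex_of_real ((cmod c * norm x)\<^sup>2)"
    unfolding complex_norm_square[symmetric] cinner_self_eq_norm_square of_real_mult
    by (simp add: power_mult_distrib)
  finally have "(norm (c *\<^sub>C x))\<^sup>2 = (cmod c * norm x)\<^sup>2"
    unfolding power2_norm_eq_Re_cinner by simp
  then show ?thesis by (simp add: power2_eq_iff_nonneg)
qed

lemma power2_norm_add:
  "(norm (x + y))\<^sup>2 = (norm x)\<^sup>2 + (norm y)\<^sup>2 + 2 * Re (cinner x (y::'a::complex_inner))"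
proof -
  have "cinner (x + y) (x + y) = cinner x x + cinner y y + (cinner x y + cnj (cinner x y))"
    using cinner_cnj[of y x] by (simp add: cinner_add_left cinner_add_right)
  then show ?thesis unfolding power2_norm_eq_Re_cinner by simp
qed

lemma parallelogram_law:
  "(norm (x + y))\<^sup>2 + (norm (x - y))\<^sup>2 = 2 * (norm x)\<^sup>2 + 2 * (norm (y::'a::complex_inner))\<^sup>2"
  using power2_norm_add[of x y] power2_norm_add[of x "- y"] by (simp add: cinner_minus_right)

lemma bounded_bilinear_cinner: "bounded_bilinear (cinner :: 'a::complex_inner \<Rightarrow> 'a \<Rightarrow> complex)"
proof
  fix a a' b b' :: 'a and r :: real
  show "cinner (a + a') b = cinner a b + cinner a' b" by (rule cinner_add_left)
  show "cinner a (b + b') = cinner a b + cinner a b'" by (rule cinner_add_right)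
  show "cinner (r *\<^sub>R a) b = r *\<^sub>R cinner a b" by (simp add: cinner_scaleR_left scaleR_conv_of_real)
  show "cinner a (r *\<^sub>R b) = r *\<^sub>R cinner a b" by (simp add: cinner_scaleR_right scaleR_conv_of_real)
next
  show "\<exists>K. \<forall>a b::'a. norm (cinner a b) \<le> norm a * norm b * K"
    by (rule exI[of _ 1]) (simp add: cinner_cauchy_schwarz)
qed

lemma continuous_on_cinner_right: "continuous_on UNIV (cinner x)"
  by (rule linear_continuous_on, rule bounded_bilinear.bounded_linear_right[OF bounded_bilinear_cinner])

lemma continuous_on_cinner_left: "continuous_on UNIV (\<lambda>y. cinner y x)"
  by (rule linear_continuous_on, rule bounded_bilinear.bounded_linear_left[OF bounded_bilinear_cinner])

lemma bounded_linear_scaleC: "bounded_linear (\<lambda>x::'a::complex_inner. c *\<^sub>C x)"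
proof (rule bounded_linear_intro[where K="cmod c"])
  fix x y :: 'a and r :: real
  show "c *\<^sub>C (x + y) = c *\<^sub>C x + c *\<^sub>C y" by (rule scaleC_add_right)
  show "c *\<^sub>C (r *\<^sub>R x) = r *\<^sub>R (c *\<^sub>C x)" by (simp add: scaleR_scaleC scaleC_scaleC mult.commute)
  show "norm (c *\<^sub>C x) \<le> norm x * cmod c" by (simp add: norm_scaleC mult.commute)
qed

lemma clinear_add: "clinear f \<Longrightarrow> f (x + y) = f x + f y"
  by (simp add: clinear_def)

lemma clinear_scaleC: "clinear f \<Longrightarrow> f (c *\<^sub>C x) = c *\<^sub>C f x"
  by (simp add: clinear_def)

lemma clinear_zero: "clinear f \<Longrightarrow> f 0 = 0"
  using clinear_scaleC[of f 0 0] by simp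

lemma clinear_diff: "clinear f \<Longrightarrow> f (x - y) = f x - f y"
  using clinear_add[of f x "(- 1) *\<^sub>C y"] clinear_scaleC[of f "- 1" y] by (simp add: scaleC_minus_one)

lemma clinear_scaleR: "clinear (f :: 'a::complex_inner \<Rightarrow> 'b::complex_inner) \<Longrightarrow> f (r *\<^sub>R x) = r *\<^sub>R f x"
  by (simp add: scaleR_scaleC clinear_scaleC)

lemma clinear_sum: "clinear f \<Longrightarrow> f (\<Sum>i\<in>A. g i) = (\<Sum>i\<in>A. f (g i))"
  by (induction A rule: infinite_finite_induct) (auto simp: clinear_add clinear_zero)

lemma clinear_sum_list: "clinear g \<Longrightarrow> g (sum_list (map f xs)) = (\<Sum>x\<leftarrow>xs. g (f x))"
  by (induction xs) (simp_all add: clinear_add clinear_zero)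

lemma bounded_clinear_clinear: "bounded_clinear f \<Longrightarrow> clinear f"
  by (simp add: bounded_clinear_def)

lemma bounded_clinear_iff:
  "bounded_clinear (f :: 'a::complex_inner \<Rightarrow> 'b::complex_inner) \<longleftrightarrow> clinear f \<and> bounded_linear f"
proof
  assume f: "bounded_clinear f"
  then obtain K where "\<And>x. norm (f x) \<le> norm x * K" and l: "clinear f"
    by (auto simp: bounded_clinear_def)
  then show "clinear f \<and> bounded_linear f"
    by (auto intro!: bounded_linear_intro[where K=K] simp: clinear_add scaleR_scaleC clinear_scaleC)
next
  assume "clinear f \<and> bounded_linear f"
  then show "bounded_clinear f"
    using bounded_linear.bounded by (fastforce simp: bounded_clinear_def)
qed

lemma bounded_clinear_bounded_linear: "bounded_clinear f \<Longrightarrow> bounded_linear f"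
  by (simp add: bounded_clinear_iff)

lemma bounded_clinear_ident: "bounded_clinear (\<lambda>x::'a::complex_inner. x)"
  by (auto simp: bounded_clinear_def clinear_def intro: exI[of _ 1])

lemma bounded_clinear_id: "bounded_clinear (id :: 'a::complex_inner \<Rightarrow> 'a)"
  by (simp add: id_def bounded_clinear_ident)

lemma bounded_clinear_compose:
  assumes "bounded_clinear (f :: 'b::complex_inner \<Rightarrow> 'c::complex_inner)" "bounded_clinear (g :: 'a::complex_inner \<Rightarrow> 'b)"
  shows "bounded_clinear (f \<circ> g)"
  using assms bounded_linear_compose[of f g]
  by (simp add: bounded_clinear_iff clinear_def comp_def)

lemma bounded_clinear_add:
  assumes "bounded_clinear (f :: 'a::complex_inner \<Rightarrow> 'b::complex_inner)" "bounded_clinear g"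
  shows "bounded_clinear (\<lambda>x. f x + g x)"
  using assms bounded_linear_add[of f g]
  by (auto simp: bounded_clinear_iff clinear_def scaleC_add_right)

lemma bounded_clinear_diff:
  assumes "bounded_clinear (f :: 'a::complex_inner \<Rightarrow> 'b::complex_inner)" "bounded_clinear g"
  shows "bounded_clinear (\<lambda>x. f x - g x)"
  using assms bounded_linear_sub[of f g]
  by (auto simp: bounded_clinear_iff clinear_def scaleC_diff_right)

lemma bounded_clinear_scaleC:
  assumes "bounded_clinear (f :: 'a::complex_inner \<Rightarrow> 'b::complex_inner)"
  shows "bounded_clinear (\<lambda>x. c *\<^sub>C f x)"
  using assms bounded_linear_compose[OF bounded_linear_scaleC, of f c]
  by (auto simp: bounded_clinear_iff clinear_def scaleC_add_right scaleC_scaleC mult.commute)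

lemma bounded_clinear_scaleR:
  assumes "bounded_clinear (f :: 'a::complex_inner \<Rightarrow> 'b::complex_inner)"
  shows "bounded_clinear (\<lambda>x. r *\<^sub>R f x)"
  using bounded_clinear_scaleC[OF assms, of "complex_of_real r"] by (simp add: scaleR_scaleC)

lemma bounded_clinear_nonneg_bound:
  assumes "bounded_clinear f"
  obtains K where "0 \<le> K" "\<And>x. norm (f x) \<le> norm x * K"
proof -
  obtain K where K: "\<And>x. norm (f x) \<le> norm x * K"
    using assms by (auto simp: bounded_clinear_def)
  have "norm (f x) \<le> norm x * max 0 K" for x
    using K[of x] mult_left_mono[of K "max 0 K" "norm x"] by simp
  then show ?thesis by (intro that[of "max 0 K"]) auto
qed

section \<open>Density arguments\<close>

lemma continuous_eq_on_dense:
  fixes f g :: "'a::topological_space \<Rightarrow> 'b::t2_space"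
  assumes "continuous_on UNIV f" "continuous_on UNIV g" "closure D = UNIV"
    and "\<And>x. x \<in> D \<Longrightarrow> f x = g x"
  shows "f x = g x"
proof -
  have "closure D \<subseteq> {x. f x = g x}"
    using assms(4) by (intro closure_minimal closed_Collect_eq[OF assms(1,2)]) auto
  then show ?thesis using assms(3) by auto
qed

lemma continuous_additive_on_dense:
  fixes g :: "'a::real_normed_vector \<Rightarrow> 'b::real_normed_vector"
  assumes g: "continuous_on UNIV g" and dense: "closure D = UNIV"
    and D_add: "\<And>x y. x \<in> D \<Longrightarrow> y \<in> D \<Longrightarrow> x + y \<in> D"
    and g_add: "\<And>x y. x \<in> D \<Longrightarrow> y \<in> D \<Longrightarrow> g (x + y) = g x + g y"
  shows "g (x + y) = g x + g y"
proof -
  have shift_cont: "continuous_on UNIV (\<lambda>y. g (u + y))" "continuous_on UNIV (\<lambda>u. g (u + y))" for u y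
    by (rule continuous_on_compose2[OF g], auto intro!: continuous_intros)+
  have sum_cont: "continuous_on UNIV (\<lambda>y. g u + g y)" "continuous_on UNIV (\<lambda>u. g u + g y)" for u y
    by (intro continuous_intros g)+
  have "g (u + y) = g u + g y" if "u \<in> D" for u
    by (rule continuous_eq_on_dense[OF shift_cont(1) sum_cont(1) dense]) (simp add: that g_add)
  then show ?thesis
    by (rule continuous_eq_on_dense[OF shift_cont(2) sum_cont(2) dense])
qed

lemma cinner_eq_on_dense:
  assumes "closure D = UNIV" "\<And>y. y \<in> D \<Longrightarrow> cinner z y = cinner z' y"
  shows "z = z'"
proof -
  have "cinner (z - z') (z - z') = (\<lambda>_. 0) (z - z')"
    by (rule continuous_eq_on_dense[OF continuous_on_cinner_right continuous_on_const assms(1)])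
       (simp add: cinner_diff_left assms(2))
  then show ?thesis by (simp add: cinner_self_eq_zero)
qed

lemma cinner_zero_on_closure:
  assumes "y \<in> closure A" "\<And>g. g \<in> A \<Longrightarrow> cinner x g = 0"
  shows "cinner x y = 0"
proof -
  have "closure A \<subseteq> {y. cinner x y = 0}"
    using assms(2)
    by (intro closure_minimal closed_Collect_eq[OF continuous_on_cinner_right continuous_on_const]) auto
  then show ?thesis using assms(1) by auto
qed

lemma norm_le_if_cinner_bounded_on_dense:
  assumes dense: "closure D = UNIV" and K: "0 \<le> K"
    and bound: "\<And>y. y \<in> D \<Longrightarrow> cmod (cinner z y) \<le> K * norm y"
  shows "norm z \<le> K"
proof -
  have "closure D \<subseteq> {y. cmod (cinner z y) \<le> K * norm y}"
    using bound
    by (intro closure_minimal closed_Collect_le continuous_on_norm[OF continuous_on_cinner_right])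
       (auto intro!: continuous_intros)
  then have "cmod (cinner z z) \<le> K * norm z" using dense by auto
  then have "norm z * norm z \<le> K * norm z"
    unfolding cinner_self_eq_norm_square norm_of_real by (simp add: power2_eq_square)
  then show ?thesis using K by (cases "z = 0") auto
qed

lemma bounded_linear_extension_from_dense:
  fixes S :: "'a::real_normed_vector \<Rightarrow> 'b::{real_normed_vector, complete_space}"
  assumes dense: "closure D = UNIV" and C: "0 \<le> C"
    and D_add: "\<And>x y. x \<in> D \<Longrightarrow> y \<in> D \<Longrightarrow> x + y \<in> D"
    and D_scaleR: "\<And>r x. x \<in> D \<Longrightarrow> r *\<^sub>R x \<in> D"
    and S_add: "\<And>x y. x \<in> D \<Longrightarrow> y \<in> D \<Longrightarrow> S (x + y) = S x + S y"
    and S_scaleR: "\<And>r x. x \<in> D \<Longrightarrow> S (r *\<^sub>R x) = r *\<^sub>R S x"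
    and S_bound: "\<And>x. x \<in> D \<Longrightarrow> norm (S x) \<le> C * norm x"
  shows "\<exists>T. bounded_linear T \<and> (\<forall>x\<in>D. T x = S x)"
proof -
  have D_diff: "x - y \<in> D" and S_diff: "S (x - y) = S x - S y" if "x \<in> D" "y \<in> D" for x y
    using D_add[OF that(1) D_scaleR[OF that(2), of "- 1"]] S_add[OF that(1) D_scaleR[OF that(2), of "- 1"]]
      S_scaleR[OF that(2), of "- 1"]
    by simp_all
  have "C-lipschitz_on D S"
    using C S_bound by (intro lipschitz_onI) (simp_all add: dist_norm D_diff flip: S_diff)
  then obtain T where T: "C-lipschitz_on UNIV T" and TS: "\<And>x. x \<in> D \<Longrightarrow> T x = S x"
    using lipschitz_extend_closure dense by metis
  have T_cont: "continuous_on UNIV T" by (rule lipschitz_on_continuous_on[OF T])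
  have T_add: "T (x + y) = T x + T y" for x y
    by (rule continuous_additive_on_dense[OF T_cont dense D_add]) (simp_all add: TS S_add D_add)
  have T_scaleR: "T (r *\<^sub>R x) = r *\<^sub>R T x" for r x
  proof (rule continuous_eq_on_dense[OF _ _ dense])
    show "continuous_on UNIV (\<lambda>x. T (r *\<^sub>R x))"
      by (rule continuous_on_compose2[OF T_cont]) (auto intro: continuous_on_scaleR continuous_on_id continuous_on_const)
    show "continuous_on UNIV (\<lambda>x. r *\<^sub>R T x)"
      by (intro continuous_on_scaleR continuous_on_const T_cont)
  qed (simp add: TS D_scaleR S_scaleR)
  have "norm (T x) \<le> norm x * C" for x
    using lipschitz_onD[OF T, of x 0] T_scaleR[of 0 x] by (simp add: mult.commute)
  then have "bounded_linear T"
    using T_add T_scaleR by (intro bounded_linear_intro)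
  then show ?thesis using TS by blast
qed

section \<open>Riesz representation and bounded sesquilinear forms\<close>

lemma minimizing_sequence_Cauchy:
  fixes c :: "nat \<Rightarrow> 'a::complex_inner"
  assumes convex: "convex C" and c_in: "\<And>k. c k \<in> C" and d_le: "\<And>x. x \<in> C \<Longrightarrow> d \<le> norm x"
    and d: "0 \<le> d" and lim: "(\<lambda>k. norm (c k)) \<longlonglongrightarrow> d"
  shows "Cauchy c"
proof (rule metric_CauchyI)
  define a where "a k = (norm (c k))\<^sup>2 - d\<^sup>2" for k
  have a_lim: "a \<longlonglongrightarrow> 0"
    unfolding a_def using tendsto_diff[OF tendsto_power[OF lim, of 2] tendsto_const, of "d\<^sup>2"] by simp
  \<comment> \<open>the midpoint of two points of \<open>C\<close> lies in \<open>C\<close>, so the parallelogram law bounds their distance\<close>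
  have dist_bound: "(norm (c k - c l))\<^sup>2 \<le> 2 * a k + 2 * a l" for k l
  proof -
    have "(1/2) *\<^sub>R c k + (1/2) *\<^sub>R c l \<in> C" by (rule convexD[OF convex c_in c_in]) auto
    then have "d \<le> norm ((1/2) *\<^sub>R (c k + c l))" using d_le by (simp add: scaleR_add_right)
    then have "(2 * d)\<^sup>2 \<le> (norm (c k + c l))\<^sup>2" using d by (intro power_mono) auto
    then show ?thesis using parallelogram_law[of "c k" "c l"] by (simp add: a_def power_mult_distrib)
  qed
  fix e :: real assume e: "e > 0"
  then have "\<forall>\<^sub>F k in sequentially. a k < e\<^sup>2 / 4" by (intro order_tendstoD(2)[OF a_lim]) simp
  then obtain M where M: "\<And>k. M \<le> k \<Longrightarrow> a k < e\<^sup>2 / 4" by (auto simp: eventually_sequentially)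
  have "dist (c k) (c l) < e" if "M \<le> k" "M \<le> l" for k l
  proof (rule power2_less_imp_less)
    show "(dist (c k) (c l))\<^sup>2 < e\<^sup>2"
      using dist_bound[of k l] M[OF that(1)] M[OF that(2)] by (simp add: dist_norm)
  qed (use e in simp)
  then show "\<exists>M. \<forall>m\<ge>M. \<forall>n\<ge>M. dist (c m) (c n) < e" by blast
qed

lemma closed_convex_has_min_norm:
  fixes C :: "'a::chilbert_space set"
  assumes closed: "closed C" and convex: "convex C" and nonempty: "C \<noteq> {}"
  shows "\<exists>z\<in>C. \<forall>c\<in>C. norm z \<le> norm c"
proof -
  define d where "d = Inf (norm ` C)"
  have d_le: "d \<le> norm c" if "c \<in> C" for c
    unfolding d_def using that by (intro cInf_lower bdd_belowI[of _ 0]) auto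
  have d_nonneg: "0 \<le> d" unfolding d_def using nonempty by (intro cInf_greatest) auto
  have "\<exists>c\<in>C. norm c < d + inverse (real (Suc k))" for k
  proof -
    have "Inf (norm ` C) < d + inverse (real (Suc k))" by (simp add: d_def)
    then show ?thesis using cInf_lessD[of "norm ` C"] nonempty by blast
  qed
  then obtain c where c_in: "\<And>k. c k \<in> C" and c_norm: "\<And>k. norm (c k) < d + inverse (real (Suc k))"
    by metis
  have norm_c_lim: "(\<lambda>k. norm (c k)) \<longlonglongrightarrow> d"
  proof (rule tendsto_sandwich[OF _ _ tendsto_const])
    show "\<forall>\<^sub>F k in sequentially. d \<le> norm (c k)" using d_le c_in by simp
    show "\<forall>\<^sub>F k in sequentially. norm (c k) \<le> d + inverse (real (Suc k))"
      using c_norm by (intro always_eventually allI less_imp_le)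
    show "(\<lambda>k. d + inverse (real (Suc k))) \<longlonglongrightarrow> d"
      using tendsto_add[OF tendsto_const LIMSEQ_inverse_real_of_nat, of d] by simp
  qed
  have "Cauchy c" by (rule minimizing_sequence_Cauchy[OF convex c_in d_le d_nonneg norm_c_lim])
  then obtain z where lim: "c \<longlonglongrightarrow> z" using Cauchy_convergent_iff convergent_def by blast
  have "z \<in> C" using closed_sequentially[OF closed _ lim] c_in by blast
  moreover have "norm z = d" using LIMSEQ_unique[OF tendsto_norm[OF lim] norm_c_lim] .
  ultimately show ?thesis using d_le by auto
qed

lemma min_norm_orthogonal_to_kernel:
  fixes g :: "'a::complex_inner \<Rightarrow> complex"
  assumes g_add: "\<And>x y. g (x + y) = g x + g y" and g_scaleC: "\<And>c x. g (c *\<^sub>C x) = c * g x"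
    and z: "g z = 1" and z_min: "\<And>x. g x = 1 \<Longrightarrow> norm z \<le> norm x"
    and y: "g y = 0"
  shows "cinner y z = 0"
proof -
  define \<beta> where "\<beta> = cinner z y"
  define t where "t = 1 / ((norm y)\<^sup>2 + 1)"
  have t_pos: "t > 0" and t_small: "t * (norm y)\<^sup>2 < 1"
    unfolding t_def by (simp_all add: add_pos_nonneg field_simps)
  define s where "s = - (complex_of_real t * \<beta>)"
  \<comment> \<open>moving \<open>z\<close> along the kernel direction \<open>y\<close> by \<open>s\<close> does not decrease its norm\<close>
  have "(norm z)\<^sup>2 \<le> (norm (z + s *\<^sub>C y))\<^sup>2"
    using z_min[of "z + s *\<^sub>C y"] z y by (simp add: g_add g_scaleC power_mono)
  also have "\<dots> = (norm z)\<^sup>2 + t\<^sup>2 * (cmod \<beta>)\<^sup>2 * (norm y)\<^sup>2 - 2 * t * (cmod \<beta>)\<^sup>2"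
  proof -
    have "cinner z (s *\<^sub>C y) = - complex_of_real (t * (cmod \<beta>)\<^sup>2)"
      using complex_norm_square[of "cnj \<beta>"] by (simp add: cinner_scaleC_right s_def \<beta>_def mult.commute)
    then show ?thesis
      using t_pos by (simp add: power2_norm_add norm_scaleC s_def norm_mult power_mult_distrib)
  qed
  finally have "0 \<le> t * (cmod \<beta>)\<^sup>2 * (t * (norm y)\<^sup>2 - 2)"
    by (simp add: algebra_simps power2_eq_square)
  then have "t * (cmod \<beta>)\<^sup>2 \<le> 0"
    using t_small by (simp add: zero_le_mult_iff)
  then have "\<beta> = 0" using t_pos by (simp add: mult_le_0_iff)
  then show ?thesis using cinner_cnj[of y z] by (simp add: \<beta>_def)
qed

lemma riesz_representation:
  fixes g :: "'a::chilbert_space \<Rightarrow> complex"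
  assumes g: "bounded_linear g" and g_scaleC: "\<And>c x. g (c *\<^sub>C x) = c * g x"
  shows "\<exists>z. \<forall>x. g x = cinner x z"
proof (cases "\<forall>x. g x = 0")
  case True
  then show ?thesis by (intro exI[of _ 0]) simp
next
  case False
  then obtain x0 where x0: "g x0 \<noteq> 0" by blast
  have g_add: "g (x + y) = g x + g y" for x y by (rule linear_add[OF bounded_linear.linear[OF g]])
  have g_diff: "g (x - y) = g x - g y" for x y by (rule linear_diff[OF bounded_linear.linear[OF g]])
  define C where "C = {x. g x = 1}"
  have "closed C" unfolding C_def
    by (rule closed_Collect_eq) (auto intro: linear_continuous_on g continuous_on_const)
  moreover have "convex C" unfolding C_def
    by (rule convexI) (simp add: g_add g_scaleC scaleR_scaleC flip: of_real_add)
  moreover have "inverse (g x0) *\<^sub>C x0 \<in> C" using x0 by (simp add: C_def g_scaleC)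
  ultimately obtain z where z: "g z = 1" and z_min: "\<And>x. g x = 1 \<Longrightarrow> norm z \<le> norm x"
    using closed_convex_has_min_norm[of C] by (auto simp: C_def)
  have "z \<noteq> 0" using z g_scaleC[of 0 0] by auto
  then have N: "(norm z)\<^sup>2 > 0" by simp
  show ?thesis
  proof (intro exI allI)
    fix x
    have "g (x - g x *\<^sub>C z) = 0" by (simp add: g_diff g_scaleC z)
    then have "cinner (x - g x *\<^sub>C z) z = 0"
      using min_norm_orthogonal_to_kernel[OF g_add g_scaleC z] z_min by blast
    then have "cinner x z = g x * complex_of_real ((norm z)\<^sup>2)"
      by (simp add: cinner_diff_left cinner_scaleC_left cinner_self_eq_norm_square)
    then show "g x = cinner x (complex_of_real (inverse ((norm z)\<^sup>2)) *\<^sub>C z)"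
      using N by (simp add: cinner_scaleC_right field_simps)
  qed
qed

lemma continuous_scaleC_hom_on_dense:
  assumes T: "bounded_linear (T :: 'a::complex_inner \<Rightarrow> 'b::complex_inner)" and dense: "closure D = UNIV"
    and T_scaleC: "\<And>x. x \<in> D \<Longrightarrow> T (c *\<^sub>C x) = c *\<^sub>C T x"
  shows "T (c *\<^sub>C x) = c *\<^sub>C T x"
proof (rule continuous_eq_on_dense[OF _ _ dense T_scaleC])
  show "continuous_on UNIV (\<lambda>x. T (c *\<^sub>C x))" "continuous_on UNIV (\<lambda>x. c *\<^sub>C T x)"
    using linear_continuous_on[OF bounded_linear_compose[OF T bounded_linear_scaleC]]
      linear_continuous_on[OF bounded_linear_compose[OF bounded_linear_scaleC T]]
    by simp_all
qed

lemma bounded_clinear_extension_from_dense: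
  fixes S :: "'a::complex_inner \<Rightarrow> 'b::chilbert_space"
  assumes dense: "closure D = UNIV" and C: "0 \<le> C"
    and D_add: "\<And>x y. x \<in> D \<Longrightarrow> y \<in> D \<Longrightarrow> x + y \<in> D"
    and D_scaleC: "\<And>c x. x \<in> D \<Longrightarrow> c *\<^sub>C x \<in> D"
    and S_add: "\<And>x y. x \<in> D \<Longrightarrow> y \<in> D \<Longrightarrow> S (x + y) = S x + S y"
    and S_scaleC: "\<And>c x. x \<in> D \<Longrightarrow> S (c *\<^sub>C x) = c *\<^sub>C S x"
    and S_bound: "\<And>x. x \<in> D \<Longrightarrow> norm (S x) \<le> C * norm x"
  shows "\<exists>T. bounded_clinear T \<and> (\<forall>x\<in>D. T x = S x)"
proof -
  have "\<exists>T. bounded_linear T \<and> (\<forall>x\<in>D. T x = S x)"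
    by (rule bounded_linear_extension_from_dense[OF dense C D_add _ S_add _ S_bound])
       (simp_all add: scaleR_scaleC D_scaleC S_scaleC)
  then obtain T where T: "bounded_linear T" and TS: "\<forall>x\<in>D. T x = S x"
    by blast
  have "T (c *\<^sub>C x) = c *\<^sub>C T x" for c x
    by (rule continuous_scaleC_hom_on_dense[OF T dense]) (simp add: TS D_scaleC S_scaleC)
  then have "bounded_clinear T"
    using T by (simp add: bounded_clinear_iff clinear_def linear_add[OF bounded_linear.linear[OF T]])
  then show ?thesis using TS by blast
qed

lemma antilinear_functional_representation_on_dense:
  fixes f :: "'a::chilbert_space \<Rightarrow> complex"
  assumes dense: "closure D = UNIV" and K: "0 \<le> K"
    and D_add: "\<And>x y. x \<in> D \<Longrightarrow> y \<in> D \<Longrightarrow> x + y \<in> D"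
    and D_scaleC: "\<And>c x. x \<in> D \<Longrightarrow> c *\<^sub>C x \<in> D"
    and f_add: "\<And>x y. x \<in> D \<Longrightarrow> y \<in> D \<Longrightarrow> f (x + y) = f x + f y"
    and f_scaleC: "\<And>c x. x \<in> D \<Longrightarrow> f (c *\<^sub>C x) = cnj c * f x"
    and f_bound: "\<And>x. x \<in> D \<Longrightarrow> cmod (f x) \<le> K * norm x"
  shows "\<exists>z. \<forall>y\<in>D. f y = cinner z y"
proof -
  have "\<exists>g. bounded_linear g \<and> (\<forall>y\<in>D. g y = cnj (f y))"
    by (rule bounded_linear_extension_from_dense[OF dense K D_add])
       (simp_all add: scaleR_scaleC D_scaleC f_add f_scaleC f_bound scaleR_conv_of_real)
  then obtain g where g: "bounded_linear g" and gf: "\<forall>y\<in>D. g y = cnj (f y)"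
    by blast
  have "g (c *\<^sub>C y) = c * g y" for c y
  proof (rule continuous_eq_on_dense[OF _ _ dense])
    show "continuous_on UNIV (\<lambda>y. g (c *\<^sub>C y))"
      using linear_continuous_on[OF bounded_linear_compose[OF g bounded_linear_scaleC]] by simp
    show "continuous_on UNIV (\<lambda>y. c * g y)"
      by (intro continuous_intros linear_continuous_on g)
  qed (simp add: gf D_scaleC f_scaleC)
  then obtain w where w: "\<And>y. g y = cinner y w" using riesz_representation[OF g] by blast
  have "f y = cinner w y" if "y \<in> D" for y
    using gf w[of y] that cinner_cnj[of w y] by (metis complex_cnj_cnj)
  then show ?thesis by blast
qed

lemma bounded_sesquilinear_form_operator:
  fixes B :: "'k::chilbert_space \<Rightarrow> 'k \<Rightarrow> complex"
  assumes dense: "closure D = UNIV" and C: "0 \<le> C"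
    and D_add: "\<And>x y. x \<in> D \<Longrightarrow> y \<in> D \<Longrightarrow> x + y \<in> D"
    and D_scaleC: "\<And>c x. x \<in> D \<Longrightarrow> c *\<^sub>C x \<in> D"
    and B_add_left: "\<And>x x' y. x \<in> D \<Longrightarrow> x' \<in> D \<Longrightarrow> y \<in> D \<Longrightarrow> B (x + x') y = B x y + B x' y"
    and B_scaleC_left: "\<And>c x y. x \<in> D \<Longrightarrow> y \<in> D \<Longrightarrow> B (c *\<^sub>C x) y = c * B x y"
    and B_add_right: "\<And>x y y'. x \<in> D \<Longrightarrow> y \<in> D \<Longrightarrow> y' \<in> D \<Longrightarrow> B x (y + y') = B x y + B x y'"
    and B_scaleC_right: "\<And>c x y. x \<in> D \<Longrightarrow> y \<in> D \<Longrightarrow> B x (c *\<^sub>C y) = cnj c * B x y"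
    and B_bound: "\<And>x y. x \<in> D \<Longrightarrow> y \<in> D \<Longrightarrow> cmod (B x y) \<le> C * norm x * norm y"
  shows "\<exists>T. bounded_clinear T \<and> (\<forall>x\<in>D. \<forall>y\<in>D. cinner (T x) y = B x y)"
proof -
  have "\<exists>z. \<forall>y\<in>D. B x y = cinner z y" if "x \<in> D" for x
    using that C
    by (intro antilinear_functional_representation_on_dense[OF dense _ D_add D_scaleC, of "C * norm x"])
       (simp_all add: B_add_right B_scaleC_right B_bound)
  then obtain R where R: "\<And>x y. x \<in> D \<Longrightarrow> y \<in> D \<Longrightarrow> B x y = cinner (R x) y"
    by metis
  have "R (x + x') = R x + R x'" if "x \<in> D" "x' \<in> D" for x x'
    by (rule cinner_eq_on_dense[OF dense]) (simp add: that D_add cinner_add_left B_add_left flip: R)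
  moreover have "R (c *\<^sub>C x) = c *\<^sub>C R x" if "x \<in> D" for c x
    by (rule cinner_eq_on_dense[OF dense]) (simp add: that D_scaleC cinner_scaleC_left B_scaleC_left flip: R)
  moreover have "norm (R x) \<le> C * norm x" if "x \<in> D" for x
    using that C by (intro norm_le_if_cinner_bounded_on_dense[OF dense]) (simp_all add: B_bound flip: R)
  ultimately obtain T where "bounded_clinear T" "\<forall>x\<in>D. T x = R x"
    using bounded_clinear_extension_from_dense[OF dense C D_add D_scaleC, of R] by blast
  then show ?thesis using R by auto
qed

section \<open>Adjoints\<close>

definition is_adjoint :: "('a::complex_inner \<Rightarrow> 'b::complex_inner) \<Rightarrow> ('b \<Rightarrow> 'a) \<Rightarrow> bool" where
  "is_adjoint T S \<longleftrightarrow> (\<forall>x y. cinner (T x) y = cinner x (S y))"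

lemma is_adjointD: "is_adjoint T S \<Longrightarrow> cinner (T x) y = cinner x (S y)"
  by (simp add: is_adjoint_def)

lemma is_adjoint_sym: "is_adjoint T S \<Longrightarrow> is_adjoint S T"
  unfolding is_adjoint_def by (metis cinner_cnj)

lemma cadjoint_eqI: "is_adjoint T S \<Longrightarrow> cadjoint T = S"
  unfolding cadjoint_def
proof (rule the_equality)
  fix S' assume "is_adjoint T S" "\<forall>x y. cinner (T x) y = cinner x (S' y)"
  then show "S' = S" by (intro ext cinner_ext_right) (simp add: is_adjoint_def)
qed (simp add: is_adjoint_def)

lemma cadjoint_eq_if_no_adjoint:
  assumes "\<nexists>S. is_adjoint T S" "\<nexists>S. is_adjoint T' S"
  shows "cadjoint T = cadjoint T'"
proof -
  have no_adjoint: "(\<lambda>S. \<forall>x y. cinner (U x) y = cinner x (S y)) = (\<lambda>S. False)"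
    if "\<nexists>S. is_adjoint U S" for U
    using that unfolding is_adjoint_def by (intro ext) blast
  show ?thesis unfolding cadjoint_def no_adjoint[OF assms(1)] no_adjoint[OF assms(2)] ..
qed

lemma exists_adjoint_if_scaleC:
  assumes "c \<noteq> 0" "is_adjoint (\<lambda>x. c *\<^sub>C T x) S"
  shows "\<exists>S'. is_adjoint T S'"
proof
  show "is_adjoint T (\<lambda>y. cnj (inverse c) *\<^sub>C S y)"
    unfolding is_adjoint_def
  proof (intro allI)
    fix x y
    have "c * cinner (T x) y = cinner x (S y)" using is_adjointD[OF assms(2)] by (simp add: cinner_scaleC_left)
    then show "cinner (T x) y = cinner x (cnj (inverse c) *\<^sub>C S y)"
      using assms(1) by (simp add: cinner_scaleC_right field_simps)
  qed
qed

lemma is_adjoint_clinear: "is_adjoint T S \<Longrightarrow> clinear S"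
  unfolding clinear_def
proof (intro conjI allI)
  assume TS: "is_adjoint T S"
  fix x y c
  show "S (x + y) = S x + S y"
    by (rule cinner_ext_right) (simp add: is_adjointD[OF TS, symmetric] cinner_add_right)
  show "S (c *\<^sub>C x) = c *\<^sub>C S x"
    by (rule cinner_ext_right) (simp add: is_adjointD[OF TS, symmetric] cinner_scaleC_right)
qed

lemma is_adjoint_bounded_clinear:
  assumes TS: "is_adjoint T S" and T: "bounded_clinear T"
  shows "bounded_clinear S"
proof -
  obtain K where K: "0 \<le> K" "\<And>x. norm (T x) \<le> norm x * K"
    using bounded_clinear_nonneg_bound[OF T] by blast
  have "norm (S y) \<le> norm y * K" for y
  proof (cases "S y = 0")
    case False
    have "norm (S y) * norm (S y) = cmod (cinner (S y) (S y))"
      unfolding cinner_self_eq_norm_square norm_of_real by (simp add: power2_eq_square)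
    also have "\<dots> = cmod (cinner (T (S y)) y)" by (simp add: is_adjointD[OF TS])
    also have "\<dots> \<le> norm (T (S y)) * norm y" by (rule cinner_cauchy_schwarz)
    also have "\<dots> \<le> norm (S y) * (norm y * K)"
      using mult_right_mono[OF K(2)[of "S y"], of "norm y"] by (simp add: algebra_simps)
    finally show ?thesis using False by simp
  qed (simp add: K(1))
  then show ?thesis using is_adjoint_clinear[OF TS] by (auto simp: bounded_clinear_def)
qed

lemma cadjoint_is_adjoint:
  fixes T :: "'a::chilbert_space \<Rightarrow> 'b::complex_inner"
  assumes T: "bounded_clinear T"
  shows "is_adjoint T (cadjoint T)"
proof -
  have "\<exists>z. \<forall>x. cinner (T x) y = cinner x z" for y
  proof (rule riesz_representation)
    show "bounded_linear (\<lambda>x. cinner (T x) y)"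
      using bounded_linear_compose[OF bounded_bilinear.bounded_linear_left[OF bounded_bilinear_cinner]
          bounded_clinear_bounded_linear[OF T]] by simp
  qed (simp add: clinear_scaleC[OF bounded_clinear_clinear[OF T]] cinner_scaleC_left)
  then obtain S where "\<And>x y. cinner (T x) y = cinner x (S y)" by metis
  then have "is_adjoint T S" by (simp add: is_adjoint_def)
  then show ?thesis using cadjoint_eqI by metis
qed

lemma bounded_clinear_cadjoint:
  "bounded_clinear (T :: 'a::chilbert_space \<Rightarrow> 'b::complex_inner) \<Longrightarrow> bounded_clinear (cadjoint T)"
  using cadjoint_is_adjoint is_adjoint_bounded_clinear by blast

section \<open>The operator norm topology\<close>

definition opnorm_ball :: "('a::complex_inner \<Rightarrow> 'b::complex_inner) \<Rightarrow> real \<Rightarrow> ('a \<Rightarrow> 'b) set" where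
  "opnorm_ball T0 r = {T. onorm (\<lambda>x. T x - T0 x) < r}"

lemma continuous_map_opnorm_topology_iff:
  "continuous_map X opnorm_topology f \<longleftrightarrow>
     (\<forall>a\<in>topspace X. bounded_clinear (f a)) \<and>
     (\<forall>T0 r. bounded_clinear T0 \<longrightarrow> openin X {a \<in> topspace X. f a \<in> opnorm_ball T0 r})"
proof -
  have preimage: "f -` U \<inter> topspace X = {a \<in> topspace X. f a \<in> U}" for U by auto
  have "f ` topspace X \<subseteq> \<Union> {opnorm_ball T0 r | T0 r. bounded_clinear T0}"
    if "\<forall>a\<in>topspace X. bounded_clinear (f a)"
  proof
    fix b assume "b \<in> f ` topspace X"
    then obtain a where "a \<in> topspace X" "b = f a" by blast
    then show "b \<in> \<Union> {opnorm_ball T0 r | T0 r. bounded_clinear T0}"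
      using that by (intro UnionI[of "opnorm_ball (f a) 1"]) (auto simp: opnorm_ball_def onorm_zero)
  qed
  then show ?thesis
    unfolding opnorm_topology_def continuous_map_in_subtopology opnorm_ball_def[symmetric]
      continuous_on_generated_topo_iff preimage
    by blast
qed

lemma onorm_sandwich_diff_less:
  assumes L: "bounded_linear L" and R: "bounded_linear R"
    and T: "bounded_linear T" and T': "bounded_linear T'"
    and close: "onorm (\<lambda>x. T x - T' x) * (onorm L * onorm R + 1) < \<delta>"
  shows "onorm (\<lambda>x. L (T (R x)) - L (T' (R x))) < \<delta>"
proof -
  have TT': "bounded_linear (\<lambda>x. T x - T' x)" by (rule bounded_linear_sub[OF T T'])
  have LTT': "bounded_linear (L \<circ> (\<lambda>x. T x - T' x))"
    unfolding comp_def by (rule bounded_linear_compose[OF L TT'])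
  have "(\<lambda>x. L (T (R x)) - L (T' (R x))) = L \<circ> (\<lambda>x. T x - T' x) \<circ> R"
    by (auto simp: linear_diff[OF bounded_linear.linear[OF L]])
  then have "onorm (\<lambda>x. L (T (R x)) - L (T' (R x))) \<le> onorm (L \<circ> (\<lambda>x. T x - T' x)) * onorm R"
    using onorm_compose[OF LTT' R] by simp
  also have "\<dots> \<le> onorm L * onorm (\<lambda>x. T x - T' x) * onorm R"
    using onorm_compose[OF L TT'] onorm_pos_le[OF R] by (rule mult_right_mono)
  also have "\<dots> \<le> onorm (\<lambda>x. T x - T' x) * (onorm L * onorm R + 1)"
    using onorm_pos_le[OF TT'] by (simp add: algebra_simps)
  finally show ?thesis using close by linarith
qed

lemma sandwich_mem_opnorm_ball:
  assumes L: "bounded_linear L" and R: "bounded_linear R"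
    and T: "bounded_linear T" and T': "bounded_linear T'" and T0: "bounded_linear T0"
    and T'_in: "(\<lambda>x. L (T' (R x))) \<in> opnorm_ball T0 r"
    and T_close: "T \<in> opnorm_ball T' ((r - onorm (\<lambda>x. L (T' (R x)) - T0 x)) / (onorm L * onorm R + 1))"
  shows "(\<lambda>x. L (T (R x))) \<in> opnorm_ball T0 r"
proof -
  have c: "onorm L * onorm R + 1 > 0"
    using onorm_pos_le[OF L] onorm_pos_le[OF R] by (simp add: add_nonneg_pos)
  have LTR: "bounded_linear (\<lambda>x. L (T (R x)))" "bounded_linear (\<lambda>x. L (T' (R x)))"
    using bounded_linear_compose[OF L bounded_linear_compose[OF T R]]
      bounded_linear_compose[OF L bounded_linear_compose[OF T' R]] by simp_all
  have "onorm (\<lambda>x. L (T (R x)) - L (T' (R x))) < r - onorm (\<lambda>x. L (T' (R x)) - T0 x)"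
    by (rule onorm_sandwich_diff_less[OF L R T T']) (use T_close c in \<open>simp add: opnorm_ball_def pos_less_divide_eq\<close>)
  moreover have "onorm (\<lambda>x. L (T (R x)) - T0 x)
      \<le> onorm (\<lambda>x. L (T (R x)) - L (T' (R x))) + onorm (\<lambda>x. L (T' (R x)) - T0 x)"
    using onorm_triangle[OF bounded_linear_sub[OF LTR] bounded_linear_sub[OF LTR(2) T0]] by simp
  ultimately show ?thesis by (simp add: opnorm_ball_def)
qed

lemma continuous_map_opnorm_sandwich:
  fixes \<Phi> :: "'x \<Rightarrow> ('b::complex_inner \<Rightarrow> 'c::complex_inner)"
    and L :: "'c \<Rightarrow> 'd::complex_inner" and R :: "'e::complex_inner \<Rightarrow> 'b"
  assumes \<Phi>: "continuous_map X opnorm_topology \<Phi>" and L: "bounded_clinear L" and R: "bounded_clinear R"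
  shows "continuous_map X opnorm_topology (\<lambda>a. L \<circ> \<Phi> a \<circ> R)"
proof -
  have \<Phi>_bounded: "bounded_clinear (\<Phi> a)" if "a \<in> topspace X" for a
    using \<Phi> that by (simp add: continuous_map_opnorm_topology_iff)
  have \<Phi>_balls: "openin X {a \<in> topspace X. \<Phi> a \<in> opnorm_ball T0 r}" if "bounded_clinear T0" for T0 r
    using \<Phi> that by (simp add: continuous_map_opnorm_topology_iff)
  have "openin X {a \<in> topspace X. L \<circ> \<Phi> a \<circ> R \<in> opnorm_ball T0 r}" if T0: "bounded_clinear T0" for T0 r
  proof (subst openin_subopen, intro ballI)
    fix a0 assume a0: "a0 \<in> {a \<in> topspace X. L \<circ> \<Phi> a \<circ> R \<in> opnorm_ball T0 r}"
    define \<delta> where "\<delta> = (r - onorm (\<lambda>x. L (\<Phi> a0 (R x)) - T0 x)) / (onorm L * onorm R + 1)"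
    have "\<delta> > 0"
      using a0 onorm_pos_le[OF bounded_clinear_bounded_linear[OF L]] onorm_pos_le[OF bounded_clinear_bounded_linear[OF R]]
      by (simp add: \<delta>_def opnorm_ball_def comp_def add_nonneg_pos)
    then have "a0 \<in> {a \<in> topspace X. \<Phi> a \<in> opnorm_ball (\<Phi> a0) \<delta>}"
      using a0 by (simp add: opnorm_ball_def onorm_zero)
    moreover have "openin X {a \<in> topspace X. \<Phi> a \<in> opnorm_ball (\<Phi> a0) \<delta>}"
      using \<Phi>_bounded a0 by (intro \<Phi>_balls) simp
    moreover have "{a \<in> topspace X. \<Phi> a \<in> opnorm_ball (\<Phi> a0) \<delta>} \<subseteq> {a \<in> topspace X. L \<circ> \<Phi> a \<circ> R \<in> opnorm_ball T0 r}"
      using a0 sandwich_mem_opnorm_ball[of L R "\<Phi> _" "\<Phi> a0" T0 r] \<Phi>_bounded L R T0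
      by (auto simp: comp_def \<delta>_def bounded_clinear_bounded_linear)
    ultimately show "\<exists>N. openin X N \<and> a0 \<in> N \<and> N \<subseteq> {a \<in> topspace X. L \<circ> \<Phi> a \<circ> R \<in> opnorm_ball T0 r}"
      by blast
  qed
  then show ?thesis
    using \<Phi>_bounded L R by (simp add: continuous_map_opnorm_topology_iff bounded_clinear_compose)
qed

section \<open>Star algebras, spans and representations\<close>

lemma astar_one: "astar (1::'a::complex_star_algebra) = 1"
proof -
  have "astar (1::'a) = astar 1 * astar (astar 1)" by (simp only: astar_astar mult_1_right)
  also have "\<dots> = astar (astar 1 * 1)" by (simp only: astar_mult)
  also have "\<dots> = 1" by (simp only: mult_1_right astar_astar)
  finally show ?thesis .
qed

lemma astar_zero: "astar (0::'a::complex_star_algebra) = 0"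
  using astar_scaleC[of 0 "0::'a"] by simp

lemma cspan_zero: "0 \<in> cspan G"
  unfolding cspan_def by (rule CollectI, rule exI[of _ "{}"]) simp

lemma cspan_superset: "g \<in> G \<Longrightarrow> g \<in> cspan G"
  unfolding cspan_def
  by (rule CollectI, rule exI[of _ "{g}"], rule exI[of _ "\<lambda>_. 1"]) (simp add: scaleC_one)

lemma cspan_add:
  assumes "x \<in> cspan G" "y \<in> cspan G"
  shows "x + y \<in> cspan G"
proof -
  obtain F c where F: "finite F" "F \<subseteq> G" "x = (\<Sum>v\<in>F. c v *\<^sub>C v)"
    using assms(1) by (auto simp: cspan_def)
  obtain H d where H: "finite H" "H \<subseteq> G" "y = (\<Sum>v\<in>H. d v *\<^sub>C v)"
    using assms(2) by (auto simp: cspan_def)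
  define e where "e v = (if v \<in> F then c v else 0) + (if v \<in> H then d v else 0)" for v
  have F_ext: "(\<Sum>v\<in>F \<union> H. (if v \<in> F then c v else 0) *\<^sub>C v) = (\<Sum>v\<in>F. c v *\<^sub>C v)"
    by (rule sum.mono_neutral_cong_right) (use F H in auto)
  have H_ext: "(\<Sum>v\<in>F \<union> H. (if v \<in> H then d v else 0) *\<^sub>C v) = (\<Sum>v\<in>H. d v *\<^sub>C v)"
    by (rule sum.mono_neutral_cong_right) (use F H in auto)
  have "x + y = (\<Sum>v\<in>F \<union> H. e v *\<^sub>C v)"
    unfolding e_def scaleC_add_left sum.distrib F_ext H_ext F(3) H(3) ..
  then show ?thesis unfolding cspan_def using F H by blast
qed

lemma cspan_sum: "(\<And>i. i \<in> A \<Longrightarrow> f i \<in> cspan G) \<Longrightarrow> (\<Sum>i\<in>A. f i) \<in> cspan G"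
  by (induction A rule: infinite_finite_induct) (auto simp: cspan_zero cspan_add)

lemma cspan_minimal:
  assumes "0 \<in> D" "\<And>x y. x \<in> D \<Longrightarrow> y \<in> D \<Longrightarrow> x + y \<in> D" "\<And>c x. x \<in> D \<Longrightarrow> c *\<^sub>C x \<in> D"
    and "G \<subseteq> D"
  shows "cspan G \<subseteq> D"
proof
  fix x assume "x \<in> cspan G"
  then obtain F c where F: "finite F" "F \<subseteq> G" "x = (\<Sum>v\<in>F. c v *\<^sub>C v)" by (auto simp: cspan_def)
  have "(\<Sum>v\<in>F. c v *\<^sub>C v) \<in> D" using F(1,2)
    by (induction F rule: finite_induct) (use assms in auto)
  then show "x \<in> D" using F(3) by simp
qed

lemma cinner_zero_on_cspan:
  assumes "y \<in> cspan G" "\<And>g. g \<in> G \<Longrightarrow> cinner x g = 0"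
  shows "cinner x y = 0"
proof -
  obtain F c where "finite F" "F \<subseteq> G" "y = (\<Sum>v\<in>F. c v *\<^sub>C v)" using assms(1) by (auto simp: cspan_def)
  then show ?thesis using assms(2) by (auto simp: cinner_sum_right cinner_scaleC_right intro!: sum.neutral)
qed

lemma representation_add: "representation S \<Phi> \<Longrightarrow> \<Phi> (a + b) x = \<Phi> a x + \<Phi> b x"
  by (simp add: representation_def continuous_op_map_def)

lemma representation_scaleC: "representation S \<Phi> \<Longrightarrow> \<Phi> (c *\<^sub>C a) x = c *\<^sub>C \<Phi> a x"
  by (simp add: representation_def continuous_op_map_def)

lemma representation_mult: "representation S \<Phi> \<Longrightarrow> \<Phi> (a * b) x = \<Phi> a (\<Phi> b x)"
  by (simp add: representation_def)

lemma representation_zero: "representation S \<Phi> \<Longrightarrow> \<Phi> 0 x = 0"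
  using representation_scaleC[of S \<Phi> 0 0] by simp

lemma representation_sum: "representation S \<Phi> \<Longrightarrow> \<Phi> (\<Sum>l\<in>L. f l) x = (\<Sum>l\<in>L. \<Phi> (f l) x)"
  by (induction L rule: infinite_finite_induct) (auto simp: representation_zero representation_add)

text \<open>As \<^const>\<open>cadjoint\<close> is a definite description, \<open>\<Phi> (astar a) = cadjoint (\<Phi> a)\<close> alone does
  not make \<open>\<Phi> (astar a)\<close> an adjoint. If \<open>\<Phi> a\<close> had none, neither would \<open>\<Phi> (2 *\<^sub>C a)\<close>, so
  \<open>\<Phi> (astar a)\<close> and \<open>\<Phi> (astar (2 *\<^sub>C a)) = 2 *\<^sub>C \<Phi> (astar a)\<close> would be the same junk value, hence
  zero; but then \<open>\<Phi> a = cadjoint 0 = 0\<close> has an adjoint after all.\<close>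

lemma representation_is_adjoint:
  assumes \<Phi>: "representation S \<Phi>"
  shows "is_adjoint (\<Phi> a) (\<Phi> (astar a))"
proof -
  have \<Phi>_star: "\<Phi> (astar b) = cadjoint (\<Phi> b)" for b using \<Phi> by (simp add: representation_def)
  have "\<exists>T. is_adjoint (\<Phi> a) T"
  proof (rule ccontr)
    assume none: "\<nexists>T. is_adjoint (\<Phi> a) T"
    have "\<Phi> (2 *\<^sub>C a) = (\<lambda>x. 2 *\<^sub>C \<Phi> a x)" by (rule ext) (rule representation_scaleC[OF \<Phi>])
    then have "\<nexists>T. is_adjoint (\<Phi> (2 *\<^sub>C a)) T" using none exists_adjoint_if_scaleC[of 2 "\<Phi> a"] by auto
    then have "cadjoint (\<Phi> a) = cadjoint (\<Phi> (2 *\<^sub>C a))"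
      using none by (rule cadjoint_eq_if_no_adjoint[symmetric])
    then have "\<Phi> (astar a) x = \<Phi> (astar (2 *\<^sub>C a)) x" for x by (simp only: \<Phi>_star)
    also have "\<Phi> (astar (2 *\<^sub>C a)) x = 2 *\<^sub>C \<Phi> (astar a) x" for x
      by (simp add: astar_scaleC representation_scaleC[OF \<Phi>])
    finally have "\<Phi> (astar a) x = 2 *\<^sub>C \<Phi> (astar a) x" for x .
    then have "\<Phi> (astar a) x = 0" for x
      using scaleC_add_left[of 1 1 "\<Phi> (astar a) x"] by (simp add: scaleC_one)
    then have "\<Phi> (astar a) = (\<lambda>x. 0)" by (rule ext)
    then have "\<Phi> a = cadjoint (\<lambda>x. 0)"
      using \<Phi>_star[of "astar a"] by (simp only: astar_astar)
    also have "cadjoint (\<lambda>x::'b. 0::'b) = (\<lambda>x. 0)" by (rule cadjoint_eqI) (simp add: is_adjoint_def)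
    finally have "is_adjoint (\<Phi> a) (\<lambda>x. 0)" by (simp add: is_adjoint_def)
    with none show False by blast
  qed
  then obtain T where "is_adjoint (\<Phi> a) T" by blast
  moreover from this have "\<Phi> (astar a) = T" by (simp only: \<Phi>_star cadjoint_eqI)
  ultimately show ?thesis by (simp only:)
qed

lemma representation_clinear: "representation S \<Phi> \<Longrightarrow> clinear (\<Phi> a)"
  using is_adjoint_clinear[OF is_adjoint_sym[OF representation_is_adjoint]] by blast

lemma commutant_diff:
  assumes T1: "T1 \<in> commutant \<Phi>" and T2: "T2 \<in> commutant \<Phi>" and \<Phi>: "representation S \<Phi>"
  shows "(\<lambda>x. T1 x - T2 x) \<in> commutant \<Phi>"
proof -
  have "T1 (\<Phi> a x) - T2 (\<Phi> a x) = \<Phi> a (T1 x - T2 x)" for a x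
    using T1 T2 by (simp add: commutant_def fun_eq_iff clinear_diff[OF representation_clinear[OF \<Phi>]])
  then show ?thesis using T1 T2 by (simp add: commutant_def fun_eq_iff bounded_clinear_diff)
qed

lemma commutant_cadjoint:
  fixes T :: "'k::chilbert_space \<Rightarrow> 'k"
  assumes T: "T \<in> commutant \<Phi>" and \<Phi>: "representation S \<Phi>"
  shows "cadjoint T \<in> commutant \<Phi>"
proof -
  have Tb: "bounded_clinear T" and comm: "\<And>a x. T (\<Phi> a x) = \<Phi> a (T x)"
    using T by (auto simp: commutant_def fun_eq_iff)
  have adj: "is_adjoint (cadjoint T) T" by (rule is_adjoint_sym[OF cadjoint_is_adjoint[OF Tb]])
  have "cadjoint T (\<Phi> a x) = \<Phi> a (cadjoint T x)" for a x
  proof (rule cinner_ext_left)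
    fix z
    show "cinner (cadjoint T (\<Phi> a x)) z = cinner (\<Phi> a (cadjoint T x)) z"
      by (simp add: is_adjointD[OF adj] is_adjointD[OF representation_is_adjoint[OF \<Phi>]] comm)
  qed
  then show ?thesis using bounded_clinear_cadjoint[OF Tb] by (simp add: commutant_def fun_eq_iff)
qed

section \<open>Completely \<open>n\<close>-positive maps and their Stinespring dilation\<close>

lemma CPn_I_continuous_op_map: "\<theta> \<in> CPn_I S n \<Longrightarrow> i < n \<Longrightarrow> j < n \<Longrightarrow> continuous_op_map S (\<theta> i j)"
  by (simp add: CPn_I_def completely_n_positive_def)

lemma CPn_I_scaleC: "\<theta> \<in> CPn_I S n \<Longrightarrow> i < n \<Longrightarrow> j < n \<Longrightarrow> \<theta> i j (c *\<^sub>C a) x = c *\<^sub>C \<theta> i j a x"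
  by (drule (2) CPn_I_continuous_op_map) (simp add: continuous_op_map_def)

lemma CPn_I_zero: "\<theta> \<in> CPn_I S n \<Longrightarrow> i < n \<Longrightarrow> j < n \<Longrightarrow> \<theta> i j 0 x = 0"
  using CPn_I_scaleC[of \<theta> S n i j 0 0 x] by simp

lemma CPn_I_positive: "\<theta> \<in> CPn_I S n \<Longrightarrow> pos_matrix ({..<(m::nat)} \<times> {..<n}) X \<Longrightarrow>
    pos_op_matrix ({..<m} \<times> {..<n}) (\<lambda>p q. \<theta> (snd p) (snd q) (X p q))"
  by (simp add: CPn_I_def completely_n_positive_def)

lemma CPn_I_diag_one: "\<theta> \<in> CPn_I S n \<Longrightarrow> i < n \<Longrightarrow> \<theta> i i 1 = id"
  by (simp add: CPn_I_def)

lemma CPn_I_upper_one: "\<theta> \<in> CPn_I S n \<Longrightarrow> i < j \<Longrightarrow> j < n \<Longrightarrow> \<theta> i j 1 = (\<lambda>x. 0)"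
  by (simp add: CPn_I_def)

lemma CPn_I_one_eq:
  "\<theta> \<in> CPn_I S n \<Longrightarrow> \<theta>' \<in> CPn_I S n \<Longrightarrow> i \<le> j \<Longrightarrow> j < n \<Longrightarrow> \<theta> i j 1 = \<theta>' i j 1"
  by (cases "i = j") (simp_all add: CPn_I_diag_one CPn_I_upper_one)

lemma CPn_I_outside: "\<theta> \<in> CPn_I S n \<Longrightarrow> n \<le> i \<or> n \<le> j \<Longrightarrow> \<theta> i j = (\<lambda>a x. 0)"
  unfolding CPn_I_def by blast

locale stinespring_dilation =
  fixes S :: "('a::complex_star_algebra \<Rightarrow> real) set" and n :: nat
    and \<rho> :: "nat \<Rightarrow> nat \<Rightarrow> 'a \<Rightarrow> ('h::chilbert_space \<Rightarrow> 'h)"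
    and \<Phi> :: "'a \<Rightarrow> ('k::chilbert_space \<Rightarrow> 'k)" and V :: "nat \<Rightarrow> 'h \<Rightarrow> 'k"
  assumes rho_in_CPn_I: "\<rho> \<in> CPn_I S n" and stinespring: "stinespring_rep S n \<rho> \<Phi> V"
begin

definition Vadj :: "nat \<Rightarrow> 'k \<Rightarrow> 'h" where "Vadj i = cadjoint (V i)"

definition H0 :: "'k set" where "H0 = closure (cspan {V i \<xi> | i \<xi>. i < n})"

definition P :: "'k \<Rightarrow> 'k" where "P x = (\<Sum>i<n. V i (Vadj i x))"

lemma \<Phi>_representation: "representation S \<Phi>"
  using stinespring by (simp add: stinespring_rep_def)

lemma V_bounded: "i < n \<Longrightarrow> bounded_clinear (V i)"
  using stinespring by (simp add: stinespring_rep_def)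

lemma generators_dense: "closure (cspan {\<Phi> a (V i \<xi>) | a i \<xi>. i < n}) = UNIV"
  using stinespring by (simp add: stinespring_rep_def)

lemma rho_eq: "i < n \<Longrightarrow> j < n \<Longrightarrow> \<rho> i j a x = Vadj i (\<Phi> a (V j x))"
  using stinespring by (simp add: stinespring_rep_def Vadj_def)

lemmas \<Phi>_add = representation_add[OF \<Phi>_representation]
  and \<Phi>_scaleC = representation_scaleC[OF \<Phi>_representation]
  and \<Phi>_mult = representation_mult[OF \<Phi>_representation]
  and \<Phi>_sum = representation_sum[OF \<Phi>_representation]
  and \<Phi>_clinear = representation_clinear[OF \<Phi>_representation]
  and \<Phi>_adjoint = is_adjointD[OF representation_is_adjoint[OF \<Phi>_representation]]

lemma V_adjoint: "i < n \<Longrightarrow> cinner (V i x) y = cinner x (Vadj i y)"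
  unfolding Vadj_def by (rule is_adjointD[OF cadjoint_is_adjoint[OF V_bounded]])

lemma Vadj_adjoint: "i < n \<Longrightarrow> cinner (Vadj i y) x = cinner y (V i x)"
  unfolding Vadj_def by (rule is_adjointD[OF is_adjoint_sym[OF cadjoint_is_adjoint[OF V_bounded]]])

lemma Vadj_clinear: "i < n \<Longrightarrow> clinear (Vadj i)"
  unfolding Vadj_def by (intro bounded_clinear_clinear bounded_clinear_cadjoint V_bounded)

lemma eq_zero_if_orthogonal_to_generators:
  assumes "\<And>a i \<xi>. i < n \<Longrightarrow> cinner x (\<Phi> a (V i \<xi>)) = 0"
  shows "x = 0"
proof -
  have "cinner x x = 0"
  proof (rule cinner_zero_on_closure)
    show "x \<in> closure (cspan {\<Phi> a (V i \<xi>) | a i \<xi>. i < n})" using generators_dense by simp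
  qed (erule cinner_zero_on_cspan, use assms in blast)
  then show ?thesis by (simp add: cinner_self_eq_zero)
qed

lemma \<Phi>_one: "\<Phi> 1 x = x"
proof -
  have "\<Phi> 1 x - x = 0"
  proof (rule eq_zero_if_orthogonal_to_generators)
    fix a i \<xi>
    show "cinner (\<Phi> 1 x - x) (\<Phi> a (V i \<xi>)) = 0"
      by (simp add: cinner_diff_left \<Phi>_adjoint astar_one \<Phi>_mult[symmetric])
  qed
  then show ?thesis by simp
qed

lemma Vadj_V: "i < n \<Longrightarrow> j < n \<Longrightarrow> Vadj i (V j \<xi>) = (if i = j then \<xi> else 0)"
proof -
  have upper: "Vadj i (V j \<xi>) = (if i = j then \<xi> else 0)" if "i < n" "j < n" "i \<le> j" for i j \<xi>
  proof -
    have "Vadj i (V j \<xi>) = \<rho> i j 1 \<xi>" using that by (simp add: rho_eq \<Phi>_one)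
    then show ?thesis
      using that CPn_I_diag_one[OF rho_in_CPn_I, of i] CPn_I_upper_one[OF rho_in_CPn_I, of i j]
      by (cases "i = j") auto
  qed
  assume ij: "i < n" "j < n"
  show ?thesis
  proof (cases "i \<le> j")
    case False
    have "Vadj i (V j \<xi>) = 0"
      by (rule cinner_ext_left) (use ij False upper[of j i] in \<open>simp add: Vadj_adjoint V_adjoint\<close>)
    then show ?thesis using False by simp
  qed (use upper ij in blast)
qed

lemma P_in_H0: "P x \<in> H0"
  unfolding P_def H0_def
  by (rule set_mp[OF closure_subset], rule cspan_sum) (auto intro: cspan_superset)

lemma P_V: "j < n \<Longrightarrow> P (V j \<xi>) = V j \<xi>"
proof -
  assume j: "j < n"
  have "P (V j \<xi>) = (\<Sum>i<n. if i = j then V j \<xi> else 0)"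
    unfolding P_def by (rule sum.cong) (auto simp: Vadj_V j clinear_zero[OF bounded_clinear_clinear[OF V_bounded]])
  then show ?thesis using j by simp
qed

lemma P_selfadjoint: "cinner (P x) y = cinner x (P y)"
  by (simp add: P_def cinner_sum_left cinner_sum_right V_adjoint Vadj_adjoint)

lemma orthogonal_P: "m \<in> H0 \<Longrightarrow> cinner (x - P x) m = 0"
  unfolding H0_def
proof (erule cinner_zero_on_closure, erule cinner_zero_on_cspan, clarify)
  fix j \<xi> assume j: "j < n"
  have "cinner (P x) (V j \<xi>) = cinner x (P (V j \<xi>))" by (rule P_selfadjoint)
  then show "cinner (x - P x) (V j \<xi>) = 0" by (simp add: P_V j cinner_diff_left)
qed

lemma orth_proj_H0: "orth_proj H0 = P"
proof
  fix x
  show "orth_proj H0 x = P x"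
    unfolding orth_proj_def
  proof (rule the_equality)
    show "P x \<in> H0 \<and> (\<forall>z\<in>H0. cinner (x - P x) z = 0)" using P_in_H0 orthogonal_P by blast
  next
    fix y assume y: "y \<in> H0 \<and> (\<forall>z\<in>H0. cinner (x - y) z = 0)"
    have "cinner (x - y) y = 0" "cinner (x - y) (P x) = 0" "cinner (x - P x) y = 0" "cinner (x - P x) (P x) = 0"
      using y P_in_H0 orthogonal_P by auto
    moreover have "cinner (P x - y) (P x - y) = cinner ((x - y) - (x - P x)) (P x - y)" by simp
    ultimately have "cinner (P x - y) (P x - y) = 0" by (simp only: cinner_diff_left cinner_diff_right) simp
    then show "y = P x" by (simp add: cinner_self_eq_zero)
  qed
qed

lemma compression_eq_iff:
  assumes T1: "clinear T1" and T2: "clinear T2"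
  shows "P \<circ> T1 \<circ> P = P \<circ> T2 \<circ> P \<longleftrightarrow>
    (\<forall>i<n. \<forall>j<n. \<forall>\<xi>. Vadj i (T1 (V j \<xi>)) = Vadj i (T2 (V j \<xi>)))"
proof
  assume eq: "P \<circ> T1 \<circ> P = P \<circ> T2 \<circ> P"
  have entry: "cinner (Vadj i (T (V j \<xi>))) z = cinner (P (T (P (V j \<xi>)))) (V i z)"
    if "i < n" "j < n" for T i j \<xi> z
    using that by (simp add: Vadj_adjoint P_selfadjoint P_V)
  show "\<forall>i<n. \<forall>j<n. \<forall>\<xi>. Vadj i (T1 (V j \<xi>)) = Vadj i (T2 (V j \<xi>))"
  proof (intro allI impI cinner_ext_left)
    fix i j \<xi> z assume "i < n" "j < n"
    then show "cinner (Vadj i (T1 (V j \<xi>))) z = cinner (Vadj i (T2 (V j \<xi>))) z"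
      using fun_cong[OF eq, of "V j \<xi>"] by (simp only: entry comp_apply)
  qed
next
  assume "\<forall>i<n. \<forall>j<n. \<forall>\<xi>. Vadj i (T1 (V j \<xi>)) = Vadj i (T2 (V j \<xi>))"
  then show "P \<circ> T1 \<circ> P = P \<circ> T2 \<circ> P"
    unfolding P_def by (simp add: fun_eq_iff clinear_sum[OF T1] clinear_sum[OF T2] clinear_sum[OF Vadj_clinear])
qed

end

section \<open>Extreme points have injective compression maps\<close>

lemma commutant_bounded: "A \<in> commutant \<Phi> \<Longrightarrow> bounded_clinear A"
  by (simp add: commutant_def)

lemma commutant_commute: "A \<in> commutant \<Phi> \<Longrightarrow> A (\<Phi> a x) = \<Phi> a (A x)"
  by (simp add: commutant_def fun_eq_iff)

lemma id_in_commutant: "id \<in> commutant \<Phi>"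
  by (simp add: commutant_def bounded_clinear_id)

lemma cinner_plus_selfadjoint_nonneg:
  assumes sa: "is_adjoint A A" and K: "\<And>y. norm (A y) \<le> norm y * K" and eK: "\<bar>e\<bar> * K \<le> 1"
  shows "Im (cinner (y + e *\<^sub>R A y) y) = 0 \<and> 0 \<le> Re (cinner (y + e *\<^sub>R A y) y)"
proof -
  have "cnj (cinner (A y) y) = cinner (A y) y"
    using is_adjointD[OF sa, of y y] cinner_cnj[of y "A y"] by simp
  then have im: "Im (cinner (A y) y) = 0" by (metis cnj.sel(2) neg_equal_zero)
  have "\<bar>Re (cinner (A y) y)\<bar> \<le> norm (A y) * norm y"
    using abs_Re_le_cmod cinner_cauchy_schwarz order_trans by blast
  also have "\<dots> \<le> K * (norm y)\<^sup>2"
    using mult_right_mono[OF K[of y], of "norm y"] by (simp add: power2_eq_square algebra_simps)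
  finally have "\<bar>e * Re (cinner (A y) y)\<bar> \<le> (\<bar>e\<bar> * K) * (norm y)\<^sup>2"
    unfolding abs_mult mult.assoc by (rule mult_left_mono) simp
  also have "\<dots> \<le> (norm y)\<^sup>2" using mult_right_mono[OF eK, of "(norm y)\<^sup>2"] by simp
  finally show ?thesis
    using im by (simp add: cinner_add_left cinner_scaleR_left cinner_self_eq_norm_square)
qed

context stinespring_dilation
begin

definition compression_vanishes :: "('k \<Rightarrow> 'k) \<Rightarrow> bool" where
  "compression_vanishes A \<longleftrightarrow> (\<forall>i<n. \<forall>j<n. \<forall>\<xi>. Vadj i (A (V j \<xi>)) = 0)"

definition perturbed :: "real \<Rightarrow> ('k \<Rightarrow> 'k) \<Rightarrow> nat \<Rightarrow> nat \<Rightarrow> 'a \<Rightarrow> 'h \<Rightarrow> 'h" where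
  "perturbed e A i j =
     (if i < n \<and> j < n then (\<lambda>a x. Vadj i (\<Phi> a (V j x + e *\<^sub>R A (V j x)))) else (\<lambda>a x. 0))"

lemma perturbed_eq:
  assumes "i < n" "j < n"
  shows "perturbed e A i j a x = \<rho> i j a x + e *\<^sub>R Vadj i (\<Phi> a (A (V j x)))"
  using assms
  by (simp add: perturbed_def rho_eq clinear_add[OF \<Phi>_clinear] clinear_scaleR[OF \<Phi>_clinear]
      clinear_add[OF Vadj_clinear] clinear_scaleR[OF Vadj_clinear])

lemma perturbed_continuous_op_map:
  assumes A: "A \<in> commutant \<Phi>" and ij: "i < n" "j < n"
  shows "continuous_op_map S (perturbed e A i j)"
proof -
  define R where "R x = V j x + e *\<^sub>R A (V j x)" for x
  have R: "bounded_clinear R" unfolding R_def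
    by (intro bounded_clinear_add bounded_clinear_scaleR V_bounded ij
        bounded_clinear_compose[OF commutant_bounded[OF A] V_bounded, unfolded comp_def])
  have Vadj_i: "bounded_clinear (Vadj i)"
    unfolding Vadj_def by (intro bounded_clinear_cadjoint V_bounded ij)
  have \<Phi>: "continuous_map (seminorm_topology S) opnorm_topology \<Phi>"
    using \<Phi>_representation by (simp add: representation_def continuous_op_map_def)
  have "perturbed e A i j = (\<lambda>a. Vadj i \<circ> \<Phi> a \<circ> R)"
    using ij by (simp add: perturbed_def R_def fun_eq_iff)
  then show ?thesis
    unfolding continuous_op_map_def
  proof (intro conjI allI)
    show "continuous_map (seminorm_topology S) opnorm_topology (perturbed e A i j)"
      unfolding \<open>perturbed e A i j = _\<close> by (rule continuous_map_opnorm_sandwich[OF \<Phi> Vadj_i R])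
  qed (simp_all add: fun_eq_iff \<Phi>_add \<Phi>_scaleC clinear_add[OF Vadj_clinear[OF ij(1)]]
      clinear_scaleC[OF Vadj_clinear[OF ij(1)]])
qed

lemma perturbed_quadratic_term:
  assumes A: "A \<in> commutant \<Phi>" and pq: "snd p < n" "snd q < n"
    and X: "X = (\<Sum>l\<in>L. astar (B l p) * B l q)"
  shows "cinner (perturbed e A (snd p) (snd q) X \<xi>q) \<xi>p =
     (\<Sum>l\<in>L. cinner (\<Phi> (B l q) (V (snd q) \<xi>q) + e *\<^sub>R A (\<Phi> (B l q) (V (snd q) \<xi>q)))
                     (\<Phi> (B l p) (V (snd p) \<xi>p)))"
proof -
  define w where "w = V (snd q) \<xi>q + e *\<^sub>R A (V (snd q) \<xi>q)"
  have "cinner (perturbed e A (snd p) (snd q) X \<xi>q) \<xi>p = cinner (\<Phi> X w) (V (snd p) \<xi>p)"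
    using pq by (simp add: perturbed_def w_def Vadj_adjoint)
  also have "\<Phi> X w = (\<Sum>l\<in>L. \<Phi> (astar (B l p)) (\<Phi> (B l q) w))"
    unfolding X \<Phi>_sum by (simp add: \<Phi>_mult)
  also have "cinner (\<Sum>l\<in>L. \<Phi> (astar (B l p)) (\<Phi> (B l q) w)) (V (snd p) \<xi>p)
      = (\<Sum>l\<in>L. cinner (\<Phi> (B l q) w) (\<Phi> (B l p) (V (snd p) \<xi>p)))"
    unfolding cinner_sum_left by (rule sum.cong) (simp_all add: \<Phi>_adjoint astar_astar)
  also have "\<dots> = (\<Sum>l\<in>L. cinner (\<Phi> (B l q) (V (snd q) \<xi>q) + e *\<^sub>R A (\<Phi> (B l q) (V (snd q) \<xi>q)))
      (\<Phi> (B l p) (V (snd p) \<xi>p)))"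
    by (rule sum.cong) (simp_all add: w_def clinear_add[OF \<Phi>_clinear] clinear_scaleR[OF \<Phi>_clinear]
        commutant_commute[OF A])
  finally show ?thesis .
qed

lemma perturbed_pos_matrix:
  assumes A: "A \<in> commutant \<Phi>" and sa: "is_adjoint A A"
    and K: "\<And>y. norm (A y) \<le> norm y * K" and eK: "\<bar>e\<bar> * K \<le> 1"
    and X: "pos_matrix ({..<(m::nat)} \<times> {..<n}) X"
  shows "pos_op_matrix ({..<m} \<times> {..<n}) (\<lambda>p q. perturbed e A (snd p) (snd q) (X p q))"
proof -
  define I where "I = {..<m} \<times> {..<n}"
  obtain B where B: "\<And>p q. p \<in> I \<Longrightarrow> q \<in> I \<Longrightarrow> X p q = (\<Sum>l\<in>I. astar (B l p) * B l q)"
    using X unfolding pos_matrix_def I_def by blast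
  define E where "E y = y + e *\<^sub>R A y" for y
  have E: "clinear E" unfolding E_def
    using bounded_clinear_add[OF bounded_clinear_ident bounded_clinear_scaleR[OF commutant_bounded[OF A]]]
    by (simp add: bounded_clinear_clinear)
  show ?thesis unfolding pos_op_matrix_def Let_def I_def[symmetric]
  proof (intro allI)
    fix \<xi> :: "nat \<times> nat \<Rightarrow> 'h"
    define u where "u l q = \<Phi> (B l q) (V (snd q) (\<xi> q))" for l q :: "nat \<times> nat"
    \<comment> \<open>as \<open>A\<close> commutes with \<open>\<Phi>\<close>, the form is a sum of terms \<open>cinner (E y) y\<close>\<close>
    have "(\<Sum>p\<in>I. \<Sum>q\<in>I. cinner (perturbed e A (snd p) (snd q) (X p q) (\<xi> q)) (\<xi> p))
        = (\<Sum>p\<in>I. \<Sum>q\<in>I. \<Sum>l\<in>I. cinner (E (u l q)) (u l p))"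
    proof (intro sum.cong refl)
      fix p q assume pq: "p \<in> I" "q \<in> I"
      then have "snd p < n" "snd q < n" by (auto simp: I_def)
      then show "cinner (perturbed e A (snd p) (snd q) (X p q) (\<xi> q)) (\<xi> p) = (\<Sum>l\<in>I. cinner (E (u l q)) (u l p))"
        unfolding E_def u_def by (rule perturbed_quadratic_term[OF A _ _ B[OF pq]])
    qed
    also have "\<dots> = (\<Sum>p\<in>I. \<Sum>l\<in>I. \<Sum>q\<in>I. cinner (E (u l q)) (u l p))"
      by (intro sum.cong refl sum.swap)
    also have "\<dots> = (\<Sum>l\<in>I. \<Sum>p\<in>I. \<Sum>q\<in>I. cinner (E (u l q)) (u l p))"
      by (rule sum.swap)
    also have "\<dots> = (\<Sum>l\<in>I. cinner (E (\<Sum>q\<in>I. u l q)) (\<Sum>p\<in>I. u l p))"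
      by (simp add: clinear_sum[OF E] cinner_sum_left cinner_sum_right)
    finally have eq: "(\<Sum>p\<in>I. \<Sum>q\<in>I. cinner (perturbed e A (snd p) (snd q) (X p q) (\<xi> q)) (\<xi> p))
        = (\<Sum>l\<in>I. cinner (E (\<Sum>q\<in>I. u l q)) (\<Sum>p\<in>I. u l p))" .
    have "Im (cinner (E y) y) = 0 \<and> 0 \<le> Re (cinner (E y) y)" for y
      unfolding E_def by (rule cinner_plus_selfadjoint_nonneg[OF sa K eK])
    then show "Im (\<Sum>p\<in>I. \<Sum>q\<in>I. cinner (perturbed e A (snd p) (snd q) (X p q) (\<xi> q)) (\<xi> p)) = 0 \<and>
        0 \<le> Re (\<Sum>p\<in>I. \<Sum>q\<in>I. cinner (perturbed e A (snd p) (snd q) (X p q) (\<xi> q)) (\<xi> p))"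
      unfolding eq Im_sum Re_sum by (simp add: sum_nonneg)
  qed
qed

lemma perturbed_in_CPn_I:
  assumes A: "A \<in> commutant \<Phi>" "is_adjoint A A" "compression_vanishes A"
    and K: "\<And>y. norm (A y) \<le> norm y * K" and eK: "\<bar>e\<bar> * K \<le> 1"
  shows "perturbed e A \<in> CPn_I S n"
proof -
  have "perturbed e A i j 1 = \<rho> i j 1" if "i < n" "j < n" for i j
    using that A(3) by (simp add: fun_eq_iff perturbed_eq \<Phi>_one compression_vanishes_def)
  then show ?thesis
    using rho_in_CPn_I perturbed_continuous_op_map[OF A(1)] perturbed_pos_matrix[OF A(1,2) K eK]
    by (simp add: CPn_I_def completely_n_positive_def) (auto simp: perturbed_def)
qed

lemma rho_midpoint_perturbed:
  "\<rho> = (\<lambda>i j a x. (1/2) *\<^sub>R perturbed e A i j a x + (1 - 1/2) *\<^sub>R perturbed (- e) A i j a x)"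
proof (intro ext)
  fix i j a x
  show "\<rho> i j a x = (1/2) *\<^sub>R perturbed e A i j a x + (1 - 1/2) *\<^sub>R perturbed (- e) A i j a x"
  proof (cases "i < n \<and> j < n")
    case True
    then show ?thesis by (simp add: perturbed_eq algebra_simps flip: scaleR_add_left)
  next
    case False
    then show ?thesis using CPn_I_outside[OF rho_in_CPn_I, of i j] by (auto simp: perturbed_def)
  qed
qed

lemma selfadjoint_commutant_eq_zero:
  assumes A: "A \<in> commutant \<Phi>" "is_adjoint A A"
    and vanish: "\<And>i j a \<xi>. i < n \<Longrightarrow> j < n \<Longrightarrow> Vadj i (\<Phi> a (A (V j \<xi>))) = 0"
  shows "A x = 0"
proof -
  have "A (\<Phi> b (V j \<xi>)) = 0" if j: "j < n" for b j \<xi>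
  proof (rule eq_zero_if_orthogonal_to_generators)
    fix c i \<eta> assume i: "i < n"
    have "cinner (A (\<Phi> b (V j \<xi>))) (\<Phi> c (V i \<eta>)) = cinner (Vadj i (\<Phi> (astar c * b) (A (V j \<xi>)))) \<eta>"
      using i by (simp add: commutant_commute[OF A(1)] \<Phi>_adjoint \<Phi>_mult Vadj_adjoint astar_astar)
    then show "cinner (A (\<Phi> b (V j \<xi>))) (\<Phi> c (V i \<eta>)) = 0" using vanish[OF i j] by simp
  qed
  then show ?thesis
    by (intro eq_zero_if_orthogonal_to_generators) (simp add: is_adjointD[OF A(2)])
qed

lemma perturbed_neq_rho:
  assumes A: "A \<in> commutant \<Phi>" "is_adjoint A A" and e: "e \<noteq> 0" and nonzero: "A x0 \<noteq> 0"
  shows "perturbed e A \<noteq> \<rho>"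
proof
  assume eq: "perturbed e A = \<rho>"
  have "Vadj i (\<Phi> a (A (V j \<xi>))) = 0" if "i < n" "j < n" for i j a \<xi>
  proof -
    have "perturbed e A i j a \<xi> = \<rho> i j a \<xi>" by (simp only: eq)
    then have "e *\<^sub>R Vadj i (\<Phi> a (A (V j \<xi>))) = 0" using that by (simp add: perturbed_eq)
    then show ?thesis using e by simp
  qed
  then have "A x0 = 0" by (rule selfadjoint_commutant_eq_zero[OF A])
  with nonzero show False ..
qed

lemma compression_vanishes_cadjoint:
  assumes T: "T \<in> commutant \<Phi>" "compression_vanishes T"
  shows "compression_vanishes (cadjoint T)"
  unfolding compression_vanishes_def
proof (intro allI impI cinner_ext_left)
  fix i j \<xi> z assume ij: "i < n" "j < n"
  have "cinner (Vadj i (cadjoint T (V j \<xi>))) z = cnj (cinner (Vadj j (T (V i z))) \<xi>)"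
    using ij is_adjointD[OF cadjoint_is_adjoint[OF commutant_bounded[OF T(1)]], of "V i z" "V j \<xi>"]
    by (simp add: Vadj_adjoint cinner_cnj[of "T (V i z)"] cinner_cnj[of _ "V i z"])
  then show "cinner (Vadj i (cadjoint T (V j \<xi>))) z = cinner 0 z"
    using T(2) ij by (simp add: compression_vanishes_def)
qed

text \<open>Real and imaginary part: \<open>T + T\<^sup>*\<close> and \<open>\<i> (T - T\<^sup>*)\<close> cannot both vanish unless \<open>T\<close> does.\<close>

lemma exists_selfadjoint_compression_vanishes:
  assumes T: "T \<in> commutant \<Phi>" "compression_vanishes T" and nonzero: "T x0 \<noteq> 0"
  shows "\<exists>A x. A \<in> commutant \<Phi> \<and> is_adjoint A A \<and> compression_vanishes A \<and> A x \<noteq> 0"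
proof -
  define T' where "T' = cadjoint T"
  have adj: "is_adjoint T T'" unfolding T'_def by (rule cadjoint_is_adjoint[OF commutant_bounded[OF T(1)]])
  have T': "T' \<in> commutant \<Phi>" "compression_vanishes T'"
    unfolding T'_def by (rule commutant_cadjoint[OF T(1) \<Phi>_representation], rule compression_vanishes_cadjoint[OF T])
  define A1 where "A1 = (\<lambda>x. T x + T' x)"
  define A2 where "A2 = (\<lambda>x. \<i> *\<^sub>C (T x - T' x))"
  have commutant: "A1 \<in> commutant \<Phi>" "A2 \<in> commutant \<Phi>"
    using T(1) T'(1) bounded_clinear_add[of T T'] bounded_clinear_scaleC[OF bounded_clinear_diff[of T T'], of \<i>]
    by (auto simp: commutant_def fun_eq_iff A1_def A2_def clinear_add[OF \<Phi>_clinear]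
        clinear_diff[OF \<Phi>_clinear] clinear_scaleC[OF \<Phi>_clinear])
  have vanishes: "compression_vanishes A1" "compression_vanishes A2"
    using T(2) T'(2)
    by (auto simp: compression_vanishes_def A1_def A2_def clinear_add[OF Vadj_clinear]
        clinear_diff[OF Vadj_clinear] clinear_scaleC[OF Vadj_clinear])
  have selfadjoint: "is_adjoint A1 A1" "is_adjoint A2 A2"
    using is_adjointD[OF adj] is_adjointD[OF is_adjoint_sym[OF adj]]
    by (simp_all add: is_adjoint_def A1_def A2_def cinner_add_left cinner_add_right cinner_scaleC_left
        cinner_scaleC_right cinner_diff_left cinner_diff_right algebra_simps)
  have "A1 x0 \<noteq> 0 \<or> A2 x0 \<noteq> 0"
  proof (rule ccontr)
    assume "\<not> (A1 x0 \<noteq> 0 \<or> A2 x0 \<noteq> 0)"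
    then have "T x0 + T' x0 = 0" "T x0 - T' x0 = 0"
      using scaleC_scaleC[of "- \<i>" \<i> "T x0 - T' x0"] by (auto simp: A1_def A2_def scaleC_one)
    then have "(1/2) *\<^sub>C (T x0 + T x0) = 0" by (simp add: eq_iff_diff_eq_0[symmetric])
    then have "T x0 = 0" using scaleC_add_left[of "1/2" "1/2" "T x0"] by (simp add: scaleC_add_right scaleC_one)
    with nonzero show False ..
  qed
  then show ?thesis using commutant vanishes selfadjoint by blast
qed

lemma inj_on_compression_if_extreme:
  assumes extreme: "is_extreme_point (CPn_I S n) \<rho>"
  shows "inj_on (\<lambda>T. P \<circ> T \<circ> P) (commutant \<Phi>)"
proof (rule inj_onI, rule ccontr)
  fix T1 T2 assume T: "T1 \<in> commutant \<Phi>" "T2 \<in> commutant \<Phi>" "P \<circ> T1 \<circ> P = P \<circ> T2 \<circ> P" "T1 \<noteq> T2"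
  then obtain x0 where "T1 x0 - T2 x0 \<noteq> 0" by (auto simp: fun_eq_iff)
  moreover have "(\<lambda>x. T1 x - T2 x) \<in> commutant \<Phi>" by (rule commutant_diff[OF T(1,2) \<Phi>_representation])
  moreover have "compression_vanishes (\<lambda>x. T1 x - T2 x)"
    using T(3) compression_eq_iff[OF bounded_clinear_clinear bounded_clinear_clinear, OF commutant_bounded[OF T(1)]
        commutant_bounded[OF T(2)]]
    by (simp add: compression_vanishes_def clinear_diff[OF Vadj_clinear])
  ultimately obtain A x1 where A: "A \<in> commutant \<Phi>" "is_adjoint A A" "compression_vanishes A" "A x1 \<noteq> 0"
    using exists_selfadjoint_compression_vanishes by blast
  obtain K where K: "0 \<le> K" "\<And>y. norm (A y) \<le> norm y * K"
    using bounded_clinear_nonneg_bound[OF commutant_bounded[OF A(1)]] by blast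
  define e where "e = 1 / (K + 1)"
  have e: "e > 0" "\<bar>e\<bar> * K \<le> 1" "\<bar>- e\<bar> * K \<le> 1" using K(1) by (simp_all add: e_def field_simps)
  have "perturbed e A \<in> CPn_I S n \<and> perturbed (- e) A \<in> CPn_I S n \<and> 0 < (1/2::real) \<and> (1/2::real) < 1 \<and>
      \<rho> = (\<lambda>i j a x. (1/2) *\<^sub>R perturbed e A i j a x + (1 - 1/2) *\<^sub>R perturbed (- e) A i j a x)"
    using perturbed_in_CPn_I[OF A(1-3) K(2) e(2)] perturbed_in_CPn_I[OF A(1-3) K(2) e(3)]
      rho_midpoint_perturbed by simp
  then have "perturbed e A = \<rho>"
    using extreme unfolding is_extreme_point_def by blast
  then show False using perturbed_neq_rho[OF A(1,2) _ A(4)] e(1) by simp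
qed

end

section \<open>Injective compression maps give extreme points\<close>

lemma pos_matrix_rank_one:
  assumes "finite I" "k \<in> I"
  shows "pos_matrix I (\<lambda>p q. astar (\<beta> p) * \<beta> q)"
proof -
  have "(\<Sum>l\<in>I. astar (if l = k then \<beta> p else 0) * (if l = k then \<beta> q else 0)) = astar (\<beta> p) * \<beta> q"
    for p q
  proof -
    have "(\<Sum>l\<in>I. astar (if l = k then \<beta> p else 0) * (if l = k then \<beta> q else 0))
        = (\<Sum>l\<in>I. if l = k then astar (\<beta> p) * \<beta> q else 0)"
      by (rule sum.cong) (auto simp: astar_zero)
    also have "\<dots> = astar (\<beta> p) * \<beta> q" using assms by (simp add: sum.delta')
    finally show ?thesis .
  qed
  then show ?thesis unfolding pos_matrix_def by (intro exI[of _ "\<lambda>l q. if l = k then \<beta> q else 0"]) simp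
qed

lemma sum_product_delta:
  fixes h :: "nat \<Rightarrow> 'b::comm_monoid_add" and m n :: nat
  assumes "\<And>k. k < m \<Longrightarrow> ix k < n"
  shows "(\<Sum>p\<in>{..<m} \<times> {..<n}. if snd p = ix (fst p) then h (fst p) else 0) = (\<Sum>k<m. h k)"
proof -
  have "(\<Sum>p\<in>{..<m} \<times> {..<n}. if snd p = ix (fst p) then h (fst p) else 0)
      = (\<Sum>k<m. \<Sum>i<n. if i = ix k then h k else 0)"
    by (simp only: sum.cartesian_product' fst_conv snd_conv)
  also have "\<dots> = (\<Sum>k<m. h k)"
    by (rule sum.cong[OF refl]) (use assms in \<open>simp add: sum.delta'\<close>)
  finally show ?thesis .
qed

lemma sum_product_delta2:
  fixes h :: "nat \<Rightarrow> nat \<Rightarrow> 'b::comm_monoid_add" and m n :: nat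
  assumes ix: "\<And>k. k < m \<Longrightarrow> ix k < n"
  shows "(\<Sum>p\<in>{..<m} \<times> {..<n}. \<Sum>q\<in>{..<m} \<times> {..<n}.
            if snd p = ix (fst p) \<and> snd q = ix (fst q) then h (fst p) (fst q) else 0)
       = (\<Sum>k<m. \<Sum>l<m. h k l)"
proof -
  have "(\<Sum>q\<in>{..<m} \<times> {..<n}. if snd p = ix (fst p) \<and> snd q = ix (fst q) then h (fst p) (fst q) else 0)
      = (if snd p = ix (fst p) then \<Sum>l<m. h (fst p) l else 0)" for p
    using sum_product_delta[where ix=ix and h="h (fst p)", OF ix] by simp
  then show ?thesis
    using sum_product_delta[where ix=ix and h="\<lambda>k. \<Sum>l<m. h k l", OF ix] by simp
qed

lemma sum_list_map_eq_sum_nth: "sum_list (map f xs) = (\<Sum>k<length xs. f (xs ! k))"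
  by (simp add: sum_list_sum_nth atLeast0LessThan)

lemma quadratic_nonneg_imp_le:
  fixes a b c :: real
  assumes nonneg: "\<And>r. 0 \<le> a - 2 * r * b + r\<^sup>2 * b * c" and b: "0 \<le> b" and c: "0 \<le> c"
  shows "b \<le> a * c"
proof (cases "c = 0")
  case True
  show ?thesis
  proof (rule ccontr)
    assume "\<not> b \<le> a * c"
    then have "b > 0" using True by simp
    then have "a - 2 * ((a + 1) / (2 * b)) * b = - 1" by (simp add: field_simps)
    then show False using nonneg[of "(a + 1) / (2 * b)"] True by simp
  qed
next
  case False
  then have c_pos: "c > 0" using c by simp
  have "a - 2 * (1 / c) * b + (1 / c)\<^sup>2 * b * c = a - b / c"
    using c_pos by (simp add: field_simps power2_eq_square)
  then have "b / c \<le> a" using nonneg[of "1 / c"] by simp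
  then show ?thesis using c_pos by (simp add: divide_le_eq mult.commute)
qed

context stinespring_dilation
begin

text \<open>Finite formal sums \<open>\<Sum>k. \<Phi> (a k) (V (i k) (\<xi> k))\<close> are represented by lists of triples
  \<open>(a k, i k, \<xi> k)\<close>; on them every \<open>\<theta>\<close> defines the form \<open>form \<theta>\<close>, which for \<open>\<theta> = \<rho>\<close> is the
  inner product of the corresponding vectors.\<close>

type_synonym ('b, 'c) formal_sum = "('b \<times> nat \<times> 'c) list"

definition generator :: "'a \<times> nat \<times> 'h \<Rightarrow> 'k" where
  "generator t = \<Phi> (fst t) (V (fst (snd t)) (snd (snd t)))"

definition vec_of :: "('a, 'h) formal_sum \<Rightarrow> 'k" where
  "vec_of u = (\<Sum>t\<leftarrow>u. generator t)"

definition well_indexed :: "('a, 'h) formal_sum \<Rightarrow> bool" where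
  "well_indexed u \<longleftrightarrow> (\<forall>t\<in>set u. fst (snd t) < n)"

definition form_term :: "(nat \<Rightarrow> nat \<Rightarrow> 'a \<Rightarrow> 'h \<Rightarrow> 'h) \<Rightarrow> 'a \<times> nat \<times> 'h \<Rightarrow> 'a \<times> nat \<times> 'h \<Rightarrow> complex" where
  "form_term \<theta> s t = cinner (\<theta> (fst (snd s)) (fst (snd t)) (astar (fst s) * fst t) (snd (snd t))) (snd (snd s))"

definition form :: "(nat \<Rightarrow> nat \<Rightarrow> 'a \<Rightarrow> 'h \<Rightarrow> 'h) \<Rightarrow> ('a, 'h) formal_sum \<Rightarrow> ('a, 'h) formal_sum \<Rightarrow> complex" where
  "form \<theta> u w = (\<Sum>s\<leftarrow>w. \<Sum>t\<leftarrow>u. form_term \<theta> s t)"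

definition scale_terms :: "complex \<Rightarrow> ('a, 'h) formal_sum \<Rightarrow> ('a, 'h) formal_sum" where
  "scale_terms c u = map (\<lambda>t. (c *\<^sub>C fst t, snd t)) u"

definition act_terms :: "'a \<Rightarrow> ('a, 'h) formal_sum \<Rightarrow> ('a, 'h) formal_sum" where
  "act_terms b u = map (\<lambda>t. (b * fst t, snd t)) u"

lemma well_indexed_append [simp]: "well_indexed (u @ w) \<longleftrightarrow> well_indexed u \<and> well_indexed w"
  by (auto simp: well_indexed_def)

lemma well_indexed_scale_terms [simp]: "well_indexed (scale_terms c u) \<longleftrightarrow> well_indexed u"
  by (auto simp: well_indexed_def scale_terms_def)

lemma well_indexed_act_terms [simp]: "well_indexed (act_terms b u) \<longleftrightarrow> well_indexed u"
  by (auto simp: well_indexed_def act_terms_def)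

lemma vec_of_append: "vec_of (u @ w) = vec_of u + vec_of w"
  by (simp add: vec_of_def)

lemma vec_of_scale_terms: "vec_of (scale_terms c u) = c *\<^sub>C vec_of u"
  by (induction u) (simp_all add: vec_of_def scale_terms_def generator_def \<Phi>_scaleC scaleC_add_right)

lemma vec_of_act_terms: "vec_of (act_terms b u) = \<Phi> b (vec_of u)"
  by (simp add: vec_of_def act_terms_def generator_def \<Phi>_mult clinear_sum_list[OF \<Phi>_clinear] comp_def)

lemma vec_of_single: "vec_of [(a, i, \<xi>)] = \<Phi> a (V i \<xi>)"
  by (simp add: vec_of_def generator_def)

lemma form_append_left: "form \<theta> (u @ u') w = form \<theta> u w + form \<theta> u' w"
  by (simp add: form_def sum_list_addf)

lemma form_append_right: "form \<theta> u (w @ w') = form \<theta> u w + form \<theta> u w'"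
  by (simp add: form_def)

lemma form_scale_terms_left:
  assumes \<theta>: "\<theta> \<in> CPn_I S n" and uw: "well_indexed u" "well_indexed w"
  shows "form \<theta> (scale_terms c u) w = c * form \<theta> u w"
proof -
  have "form_term \<theta> s (c *\<^sub>C fst t, snd t) = c * form_term \<theta> s t" if "s \<in> set w" "t \<in> set u" for s t
    using that uw
    by (simp add: well_indexed_def form_term_def scaleC_mult_right CPn_I_scaleC[OF \<theta>] cinner_scaleC_left)
  then show ?thesis
    by (simp add: form_def scale_terms_def comp_def sum_list_const_mult cong: map_cong)
qed

lemma form_scale_terms_right:
  assumes \<theta>: "\<theta> \<in> CPn_I S n" and uw: "well_indexed u" "well_indexed w"
  shows "form \<theta> u (scale_terms c w) = cnj c * form \<theta> u w"
proof -
  have "form_term \<theta> (c *\<^sub>C fst s, snd s) t = cnj c * form_term \<theta> s t" if "s \<in> set w" "t \<in> set u" for s t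
    using that uw
    by (simp add: well_indexed_def form_term_def astar_scaleC scaleC_mult_left CPn_I_scaleC[OF \<theta>]
        cinner_scaleC_left)
  then show ?thesis
    by (simp add: form_def scale_terms_def comp_def sum_list_const_mult cong: map_cong)
qed

lemma form_act_terms: "form \<theta> (act_terms b u) w = form \<theta> u (act_terms (astar b) w)"
  unfolding form_def act_terms_def form_term_def
  by (simp add: comp_def astar_mult astar_astar mult.assoc)

lemma form_rho:
  assumes "well_indexed u" "well_indexed w"
  shows "form \<rho> u w = cinner (vec_of u) (vec_of w)"
proof -
  have "form_term \<rho> s t = cinner (generator t) (generator s)" if "s \<in> set w" "t \<in> set u" for s t
  proof -
    have "fst (snd s) < n" "fst (snd t) < n" using that assms by (auto simp: well_indexed_def)
    then show ?thesis
      by (simp add: form_term_def generator_def rho_eq Vadj_adjoint \<Phi>_mult \<Phi>_adjoint astar_astar)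
  qed
  then show ?thesis
    by (simp add: form_def vec_of_def cinner_sum_list_left cinner_sum_list_right cong: map_cong)
qed

lemma form_convex_combination:
  assumes "\<rho> = (\<lambda>i j a x. t *\<^sub>R \<theta> i j a x + (1 - t) *\<^sub>R \<theta>' i j a x)"
  shows "form \<rho> u w = complex_of_real t * form \<theta> u w + complex_of_real (1 - t) * form \<theta>' u w"
proof -
  have "form_term \<rho> s r = complex_of_real t * form_term \<theta> s r + complex_of_real (1 - t) * form_term \<theta>' s r" for s r
    unfolding form_term_def by (subst assms) (simp add: cinner_add_left cinner_scaleR_left)
  then show ?thesis by (simp add: form_def sum_list_addf sum_list_const_mult)
qed

text \<open>Positivity of \<open>form \<theta> u u\<close> is complete positivity of \<open>\<theta>\<close> applied to the rank-one matrix
  \<open>X = \<beta>\<^sup>* \<beta>\<close> over \<open>{..<length u} \<times> {..<n}\<close>, where the row \<open>\<beta>\<close> carries \<open>a k\<close> at position \<open>(k, i k)\<close>.\<close>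

lemma form_nonneg:
  assumes \<theta>: "\<theta> \<in> CPn_I S n" and u: "well_indexed u"
  shows "Im (form \<theta> u u) = 0 \<and> 0 \<le> Re (form \<theta> u u)"
proof (cases "u = []")
  case True
  then show ?thesis by (simp add: form_def)
next
  case False
  define m where "m = length u"
  define a where "a k = fst (u ! k)" for k
  define ix where "ix k = fst (snd (u ! k))" for k
  define x where "x k = snd (snd (u ! k))" for k
  have ix: "ix k < n" if "k < m" for k using u that by (auto simp: well_indexed_def ix_def m_def)
  have m: "0 < m" using False by (simp add: m_def)
  then have n: "0 < n" using ix by fastforce
  define I where "I = {..<m} \<times> {..<n}"
  define \<beta> where "\<beta> q = (if snd q = ix (fst q) then a (fst q) else 0)" for q :: "nat \<times> nat"
  define X where "X = (\<lambda>p q. astar (\<beta> p) * \<beta> q)"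
  define \<xi> where "\<xi> p = (if snd p = ix (fst p) then x (fst p) else 0)" for p :: "nat \<times> nat"
  define t where "t k l = cinner (\<theta> (ix k) (ix l) (astar (a k) * a l) (x l)) (x k)" for k l
  have "pos_matrix I X" unfolding X_def by (rule pos_matrix_rank_one[where k="(0, 0)"]) (use m n in \<open>simp_all add: I_def\<close>)
  then have "pos_op_matrix I (\<lambda>p q. \<theta> (snd p) (snd q) (X p q))"
    using CPn_I_positive[OF \<theta>, of m X] by (simp add: I_def)
  then have nonneg: "Im s = 0 \<and> 0 \<le> Re s"
    if "s = (\<Sum>p\<in>I. \<Sum>q\<in>I. cinner (\<theta> (snd p) (snd q) (X p q) (\<xi> q)) (\<xi> p))" for s
    unfolding pos_op_matrix_def Let_def that by blast
  have "cinner (\<theta> (snd p) (snd q) (X p q) (\<xi> q)) (\<xi> p) =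
      (if snd p = ix (fst p) \<and> snd q = ix (fst q) then t (fst p) (fst q) else 0)"
    if "p \<in> I" "q \<in> I" for p q
  proof -
    have "snd p < n" "snd q < n" using that by (auto simp: I_def)
    then show ?thesis by (auto simp: X_def \<beta>_def \<xi>_def t_def CPn_I_zero[OF \<theta>])
  qed
  then have "(\<Sum>p\<in>I. \<Sum>q\<in>I. cinner (\<theta> (snd p) (snd q) (X p q) (\<xi> q)) (\<xi> p))
      = (\<Sum>p\<in>I. \<Sum>q\<in>I. if snd p = ix (fst p) \<and> snd q = ix (fst q) then t (fst p) (fst q) else 0)"
    by (intro sum.cong refl) simp
  also have "\<dots> = (\<Sum>k<m. \<Sum>l<m. t k l)"
    unfolding I_def by (rule sum_product_delta2[where ix=ix]) (rule ix)
  also have "\<dots> = form \<theta> u u"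
    by (simp add: form_def sum_list_map_eq_sum_nth m_def t_def form_term_def a_def ix_def x_def)
  finally show ?thesis by (rule nonneg[OF sym])
qed

lemma form_hermitian:
  assumes \<theta>: "\<theta> \<in> CPn_I S n" and uw: "well_indexed u" "well_indexed w"
  shows "form \<theta> w u = cnj (form \<theta> u w)"
proof -
  have "Im (form \<theta> (u @ w) (u @ w)) = 0" "Im (form \<theta> (u @ scale_terms \<i> w) (u @ scale_terms \<i> w)) = 0"
    "Im (form \<theta> u u) = 0" "Im (form \<theta> w w) = 0"
    using form_nonneg[OF \<theta>] uw by simp_all
  then have "Im (form \<theta> w u) + Im (form \<theta> u w) = 0" "Re (form \<theta> w u) - Re (form \<theta> u w) = 0"
    using uw by (simp_all add: form_append_left form_append_right form_scale_terms_left[OF \<theta>]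
        form_scale_terms_right[OF \<theta>])
  then show ?thesis by (simp add: complex_eq_iff)
qed

lemma form_cauchy_schwarz:
  assumes \<theta>: "\<theta> \<in> CPn_I S n" and uw: "well_indexed u" "well_indexed w"
  shows "(cmod (form \<theta> u w))\<^sup>2 \<le> Re (form \<theta> u u) * Re (form \<theta> w w)"
proof -
  define \<beta> where "\<beta> = form \<theta> u w"
  have wu: "form \<theta> w u = cnj \<beta>" unfolding \<beta>_def by (rule form_hermitian[OF \<theta> uw])
  have "0 \<le> Re (form \<theta> u u) - 2 * r * (cmod \<beta>)\<^sup>2 + r\<^sup>2 * (cmod \<beta>)\<^sup>2 * Re (form \<theta> w w)" for r
  proof -
    define l where "l = - (complex_of_real r * \<beta>)"
    have "0 \<le> Re (form \<theta> (u @ scale_terms l w) (u @ scale_terms l w))" using form_nonneg[OF \<theta>] uw by simp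
    also have "form \<theta> (u @ scale_terms l w) (u @ scale_terms l w)
        = form \<theta> u u + l * form \<theta> w u + (cnj l * form \<theta> u w + l * cnj l * form \<theta> w w)"
      using uw by (simp add: form_append_left form_append_right form_scale_terms_left[OF \<theta>]
          form_scale_terms_right[OF \<theta>] mult.assoc)
    also have "\<dots> = form \<theta> u u - 2 * complex_of_real r * (\<beta> * cnj \<beta>)
        + complex_of_real r * complex_of_real r * (\<beta> * cnj \<beta>) * form \<theta> w w"
      unfolding l_def wu \<beta>_def[symmetric] by (simp add: algebra_simps)
    also have "\<dots> = form \<theta> u u - complex_of_real (2 * r * (cmod \<beta>)\<^sup>2)
        + complex_of_real (r\<^sup>2 * (cmod \<beta>)\<^sup>2) * form \<theta> w w"
      unfolding complex_norm_square[symmetric] by (simp add: power2_eq_square)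
    finally show ?thesis by simp
  qed
  then have "(cmod \<beta>)\<^sup>2 \<le> Re (form \<theta> u u) * Re (form \<theta> w w)"
    by (rule quadratic_nonneg_imp_le) (use form_nonneg[OF \<theta>] uw in auto)
  then show ?thesis by (simp add: \<beta>_def)
qed

definition formal_vectors :: "'k set" where
  "formal_vectors = {vec_of u | u. well_indexed u}"

lemma vec_of_in_formal_vectors [simp]: "well_indexed u \<Longrightarrow> vec_of u \<in> formal_vectors"
  by (auto simp: formal_vectors_def)

lemma formal_vectorsE:
  assumes "x \<in> formal_vectors"
  obtains u where "well_indexed u" "x = vec_of u"
  using assms by (auto simp: formal_vectors_def)

lemma formal_vectors_add: "x \<in> formal_vectors \<Longrightarrow> y \<in> formal_vectors \<Longrightarrow> x + y \<in> formal_vectors"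
  by (elim formal_vectorsE) (simp flip: vec_of_append)

lemma formal_vectors_scaleC: "x \<in> formal_vectors \<Longrightarrow> c *\<^sub>C x \<in> formal_vectors"
  by (elim formal_vectorsE) (simp flip: vec_of_scale_terms)

lemma formal_vectors_dense: "closure formal_vectors = UNIV"
proof -
  have "cspan {\<Phi> a (V i \<xi>) | a i \<xi>. i < n} \<subseteq> formal_vectors"
  proof (rule cspan_minimal[OF _ formal_vectors_add formal_vectors_scaleC])
    show "0 \<in> formal_vectors"
      using vec_of_in_formal_vectors[of "[]"] by (simp add: vec_of_def well_indexed_def)
    show "{\<Phi> a (V i \<xi>) | a i \<xi>. i < n} \<subseteq> formal_vectors"
      using vec_of_in_formal_vectors[of "[(_, _, _)]"] by (auto simp: vec_of_single well_indexed_def)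
  qed
  then show ?thesis using closure_mono generators_dense by blast
qed

context
  fixes \<theta> \<theta>' :: "nat \<Rightarrow> nat \<Rightarrow> 'a \<Rightarrow> 'h \<Rightarrow> 'h" and t :: real
  assumes \<theta>: "\<theta> \<in> CPn_I S n" and \<theta>': "\<theta>' \<in> CPn_I S n" and t: "0 < t" "t < 1"
    and decomp: "\<rho> = (\<lambda>i j a x. t *\<^sub>R \<theta> i j a x + (1 - t) *\<^sub>R \<theta>' i j a x)"
begin

lemma form_bounded:
  assumes uw: "well_indexed u" "well_indexed w"
  shows "cmod (form \<theta> u w) \<le> (1 / t) * norm (vec_of u) * norm (vec_of w)"
proof -
  have diag: "Re (form \<theta> v v) \<le> (norm (vec_of v))\<^sup>2 / t" if "well_indexed v" for v
  proof -
    have "(norm (vec_of v))\<^sup>2 = t * Re (form \<theta> v v) + (1 - t) * Re (form \<theta>' v v)"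
      using arg_cong[OF form_convex_combination[OF decomp, of v v], of Re] form_rho[OF that that]
      by (simp add: cinner_self_eq_norm_square)
    moreover have "0 \<le> (1 - t) * Re (form \<theta>' v v)" using form_nonneg[OF \<theta>' that] t by simp
    ultimately show ?thesis using t by (simp add: field_simps)
  qed
  have "(cmod (form \<theta> u w))\<^sup>2 \<le> Re (form \<theta> u u) * Re (form \<theta> w w)"
    by (rule form_cauchy_schwarz[OF \<theta> uw])
  also have "\<dots> \<le> ((norm (vec_of u))\<^sup>2 / t) * ((norm (vec_of w))\<^sup>2 / t)"
    by (rule mult_mono) (use diag uw form_nonneg[OF \<theta>] t in auto)
  also have "\<dots> = ((1 / t) * norm (vec_of u) * norm (vec_of w))\<^sup>2"
    by (simp add: power2_eq_square field_simps)
  finally show ?thesis by (rule power2_le_imp_le) (use t in simp)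
qed

lemma form_eq_if_vec_of_eq:
  assumes "well_indexed u" "well_indexed u'" "well_indexed w" "well_indexed w'"
    and "vec_of u = vec_of u'" "vec_of w = vec_of w'"
  shows "form \<theta> u w = form \<theta> u' w'"
proof -
  have left: "form \<theta> v w = form \<theta> v' w" if "well_indexed v" "well_indexed v'" "well_indexed w"
    "vec_of v = vec_of v'" for v v' w
  proof -
    have "vec_of (v @ scale_terms (- 1) v') = 0"
      using that by (simp add: vec_of_append vec_of_scale_terms scaleC_minus_one)
    then have "form \<theta> (v @ scale_terms (- 1) v') w = 0" using form_bounded[of "v @ scale_terms (- 1) v'" w] that by simp
    then show ?thesis using that by (simp add: form_append_left form_scale_terms_left[OF \<theta>])
  qed
  have "form \<theta> u w = form \<theta> u' w" using left[of u u' w] assms by simp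
  also have "\<dots> = cnj (form \<theta> w u')" using form_hermitian[OF \<theta>, of u' w] assms by simp
  also have "\<dots> = cnj (form \<theta> w' u')" using left[of w w' u'] assms by simp
  also have "\<dots> = form \<theta> u' w'" using form_hermitian[OF \<theta>, of u' w'] assms by simp
  finally show ?thesis .
qed

text \<open>The Radon-Nikodym derivative of \<open>\<theta>\<close> with respect to \<open>\<rho>\<close>: since \<open>t \<theta> \<le> \<rho>\<close>, \<open>form \<theta>\<close>
  descends to a bounded sesquilinear form on the dense subspace of vectors \<open>vec_of u\<close>.\<close>

lemma exists_density_operator:
  "\<exists>T. bounded_clinear T \<and>
     (\<forall>u w. well_indexed u \<longrightarrow> well_indexed w \<longrightarrow> cinner (T (vec_of u)) (vec_of w) = form \<theta> u w)"
proof -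
  define rep where "rep x = (SOME u. well_indexed u \<and> vec_of u = x)" for x
  have rep: "well_indexed (rep (vec_of u)) \<and> vec_of (rep (vec_of u)) = vec_of u" if "well_indexed u" for u
    unfolding rep_def using that by (intro someI_ex[of "\<lambda>v. well_indexed v \<and> vec_of v = vec_of u"]) blast
  define B where "B x y = form \<theta> (rep x) (rep y)" for x y
  have B: "B (vec_of u) (vec_of w) = form \<theta> u w" if "well_indexed u" "well_indexed w" for u w
    unfolding B_def using rep[OF that(1)] rep[OF that(2)] that by (intro form_eq_if_vec_of_eq) auto
  have "\<exists>T. bounded_clinear T \<and> (\<forall>x\<in>formal_vectors. \<forall>y\<in>formal_vectors. cinner (T x) y = B x y)"
  proof (rule bounded_sesquilinear_form_operator[OF formal_vectors_dense _ formal_vectors_add formal_vectors_scaleC])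
    show "0 \<le> 1 / t" using t by simp
    show "B (x + x') y = B x y + B x' y" if "x \<in> formal_vectors" "x' \<in> formal_vectors" "y \<in> formal_vectors"
      for x x' y
      using that by (elim formal_vectorsE) (simp add: B form_append_left flip: vec_of_append)
    show "B (c *\<^sub>C x) y = c * B x y" if "x \<in> formal_vectors" "y \<in> formal_vectors" for c x y
      using that by (elim formal_vectorsE) (simp add: B form_scale_terms_left[OF \<theta>] flip: vec_of_scale_terms)
    show "B x (y + y') = B x y + B x y'" if "x \<in> formal_vectors" "y \<in> formal_vectors" "y' \<in> formal_vectors"
      for x y y'
      using that by (elim formal_vectorsE) (simp add: B form_append_right flip: vec_of_append)
    show "B x (c *\<^sub>C y) = cnj c * B x y" if "x \<in> formal_vectors" "y \<in> formal_vectors" for c x y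
      using that by (elim formal_vectorsE) (simp add: B form_scale_terms_right[OF \<theta>] flip: vec_of_scale_terms)
    show "cmod (B x y) \<le> 1 / t * norm x * norm y" if "x \<in> formal_vectors" "y \<in> formal_vectors" for x y
      using that by (elim formal_vectorsE) (simp only: B form_bounded)
  qed
  then show ?thesis using B by auto
qed

context
  fixes T :: "'k \<Rightarrow> 'k"
  assumes T: "bounded_clinear T"
    and T_form: "\<And>u w. well_indexed u \<Longrightarrow> well_indexed w \<Longrightarrow> cinner (T (vec_of u)) (vec_of w) = form \<theta> u w"
begin

lemma density_operator_selfadjoint: "is_adjoint T T"
proof -
  have T_cont: "continuous_on UNIV T" by (rule linear_continuous_on[OF bounded_clinear_bounded_linear[OF T]])
  have cont: "continuous_on UNIV (\<lambda>y. cinner (T x) y)" "continuous_on UNIV (\<lambda>y. cinner x (T y))"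
    "continuous_on UNIV (\<lambda>x. cinner (T x) y)" "continuous_on UNIV (\<lambda>x. cinner x (T y))" for x y
    by (rule continuous_on_cinner_right, rule continuous_on_compose2[OF continuous_on_cinner_right T_cont],
        simp, rule continuous_on_compose2[OF continuous_on_cinner_left T_cont], simp, rule continuous_on_cinner_left)
  have sa_formal: "cinner (T x) y = cinner x (T y)" if "x \<in> formal_vectors" "y \<in> formal_vectors" for x y
    using that
  proof (elim formal_vectorsE)
    fix u w assume "well_indexed u" "x = vec_of u" "well_indexed w" "y = vec_of w"
    then show ?thesis using form_hermitian[OF \<theta>, of u w] cinner_cnj[of "vec_of u" "T (vec_of w)"]
      by (simp add: T_form)
  qed
  have sa_half: "cinner (T x) y = cinner x (T y)" if "x \<in> formal_vectors" for x y
    by (rule continuous_eq_on_dense[OF cont(1,2) formal_vectors_dense]) (rule sa_formal[OF that])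
  have "cinner (T x) y = cinner x (T y)" for x y
    by (rule continuous_eq_on_dense[OF cont(3,4) formal_vectors_dense]) (rule sa_half)
  then show ?thesis by (simp add: is_adjoint_def)
qed

lemma density_operator_in_commutant: "T \<in> commutant \<Phi>"
proof -
  have commute_on_formal: "T (\<Phi> a x) = \<Phi> a (T x)" if "x \<in> formal_vectors" for a x
  proof (rule cinner_eq_on_dense[OF formal_vectors_dense])
    fix y assume "y \<in> formal_vectors"
    with \<open>x \<in> formal_vectors\<close> show "cinner (T (\<Phi> a x)) y = cinner (\<Phi> a (T x)) y"
    proof (elim formal_vectorsE)
      fix u w assume uw: "well_indexed u" "x = vec_of u" "well_indexed w" "y = vec_of w"
      have "cinner (T (\<Phi> a x)) y = form \<theta> u (act_terms (astar a) w)"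
        using uw by (simp add: T_form form_act_terms flip: vec_of_act_terms)
      also have "\<dots> = cinner (T x) (\<Phi> (astar a) y)" using uw by (simp add: T_form flip: vec_of_act_terms)
      also have "\<dots> = cinner (\<Phi> a (T x)) y" by (simp add: \<Phi>_adjoint)
      finally show ?thesis .
    qed
  qed
  have "T (\<Phi> a x) = \<Phi> a (T x)" for a x
  proof (rule cinner_eq_on_dense[OF formal_vectors_dense])
    fix y assume y: "y \<in> formal_vectors"
    have "cinner (T (\<Phi> a x)) y = cinner x (\<Phi> (astar a) (T y))"
      by (simp only: is_adjointD[OF density_operator_selfadjoint] \<Phi>_adjoint)
    also have "\<dots> = cinner x (T (\<Phi> (astar a) y))" by (simp only: commute_on_formal[OF y])
    also have "\<dots> = cinner (\<Phi> a (T x)) y" by (simp only: is_adjointD[OF density_operator_selfadjoint] \<Phi>_adjoint)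
    finally show "cinner (T (\<Phi> a x)) y = cinner (\<Phi> a (T x)) y" .
  qed
  then show ?thesis using T by (simp add: commutant_def fun_eq_iff)
qed

lemma density_operator_entries:
  assumes "i < n" "j < n"
  shows "\<theta> i j a \<xi> = Vadj i (\<Phi> a (T (V j \<xi>)))"
proof (rule cinner_ext_left)
  fix \<eta>
  have "cinner (\<theta> i j a \<xi>) \<eta> = form \<theta> [(a, j, \<xi>)] [(1, i, \<eta>)]"
    by (simp add: form_def form_term_def astar_one)
  also have "\<dots> = cinner (T (\<Phi> a (V j \<xi>))) (V i \<eta>)"
    using assms T_form[of "[(a, j, \<xi>)]" "[(1, i, \<eta>)]"] by (simp add: vec_of_single well_indexed_def \<Phi>_one)
  also have "\<dots> = cinner (Vadj i (\<Phi> a (T (V j \<xi>)))) \<eta>"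
    using density_operator_in_commutant assms by (simp add: commutant_commute Vadj_adjoint)
  finally show "cinner (\<theta> i j a \<xi>) \<eta> = cinner (Vadj i (\<Phi> a (T (V j \<xi>)))) \<eta>" .
qed

end

end

lemma Vadj_T_V_eq_if_upper:
  assumes sa: "is_adjoint T T"
    and upper: "\<And>i j \<xi>. i < n \<Longrightarrow> j < n \<Longrightarrow> i \<le> j \<Longrightarrow> Vadj i (T (V j \<xi>)) = Vadj i (V j \<xi>)"
    and ij: "i < n" "j < n"
  shows "Vadj i (T (V j \<xi>)) = Vadj i (V j \<xi>)"
proof (cases "i \<le> j")
  case False
  show ?thesis
  proof (rule cinner_ext_left)
    fix z
    have "cinner (Vadj i (T (V j \<xi>))) z = cnj (cinner (Vadj j (T (V i z))) \<xi>)"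
      using ij by (simp add: Vadj_adjoint is_adjointD[OF sa] cinner_cnj[of "V j \<xi>"])
    also have "\<dots> = cinner (Vadj i (V j \<xi>)) z"
      using ij False upper[of j i z] by (simp add: Vadj_V)
    finally show "cinner (Vadj i (T (V j \<xi>))) z = cinner (Vadj i (V j \<xi>)) z" .
  qed
qed (rule upper[OF ij])

lemma eq_rho_if_inj_on_compression:
  assumes inj: "inj_on (\<lambda>T. P \<circ> T \<circ> P) (commutant \<Phi>)"
    and \<theta>: "\<theta> \<in> CPn_I S n" and \<theta>': "\<theta>' \<in> CPn_I S n" and t: "0 < t" "t < 1"
    and decomp: "\<rho> = (\<lambda>i j a x. t *\<^sub>R \<theta> i j a x + (1 - t) *\<^sub>R \<theta>' i j a x)"
  shows "\<theta> = \<rho>"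
proof -
  obtain T where T: "bounded_clinear T"
    and T_form: "\<And>u w. well_indexed u \<Longrightarrow> well_indexed w \<Longrightarrow> cinner (T (vec_of u)) (vec_of w) = form \<theta> u w"
    using exists_density_operator[OF \<theta> \<theta>' t decomp] by blast
  note T_props = density_operator_in_commutant[OF \<theta> \<theta>' t decomp T T_form]
    density_operator_selfadjoint[OF \<theta> \<theta>' t decomp T T_form]
    density_operator_entries[OF \<theta> \<theta>' t decomp T T_form]
  have "Vadj i (T (V j \<xi>)) = Vadj i (V j \<xi>)" if "i < n" "j < n" for i j \<xi>
  proof (rule Vadj_T_V_eq_if_upper[OF T_props(2) _ that])
    fix i j \<xi> assume "i < n" "j < n" "i \<le> j"
    then show "Vadj i (T (V j \<xi>)) = Vadj i (V j \<xi>)"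
      using T_props(3)[of i j 1 \<xi>] rho_eq[of i j 1 \<xi>] CPn_I_one_eq[OF \<theta> rho_in_CPn_I, of i j]
      by (simp add: \<Phi>_one)
  qed
  then have "P \<circ> T \<circ> P = P \<circ> id \<circ> P"
    using compression_eq_iff[OF bounded_clinear_clinear[OF T] bounded_clinear_clinear[OF bounded_clinear_id]]
    by simp
  then have "T = id" by (rule inj_onD[OF inj _ T_props(1) id_in_commutant])
  then show "\<theta> = \<rho>"
    using T_props(3) CPn_I_outside[OF \<theta>] CPn_I_outside[OF rho_in_CPn_I] rho_eq
    by (intro ext) (metis id_apply not_le)
qed

lemma extreme_if_inj_on_compression:
  assumes inj: "inj_on (\<lambda>T. P \<circ> T \<circ> P) (commutant \<Phi>)"
  shows "is_extreme_point (CPn_I S n) \<rho>"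
  unfolding is_extreme_point_def
proof (rule conjI[OF rho_in_CPn_I], intro allI impI)
  fix \<theta> \<theta>' t
  assume "\<theta> \<in> CPn_I S n \<and> \<theta>' \<in> CPn_I S n \<and> 0 < t \<and> t < 1 \<and>
    \<rho> = (\<lambda>i j a x. t *\<^sub>R \<theta> i j a x + (1 - t) *\<^sub>R \<theta>' i j a x)"
  then have \<theta>: "\<theta> \<in> CPn_I S n" "\<theta>' \<in> CPn_I S n" and t: "0 < t" "t < 1"
    and decomp: "\<rho> = (\<lambda>i j a x. t *\<^sub>R \<theta> i j a x + (1 - t) *\<^sub>R \<theta>' i j a x)"
    and decomp': "\<rho> = (\<lambda>i j a x. (1 - t) *\<^sub>R \<theta>' i j a x + (1 - (1 - t)) *\<^sub>R \<theta> i j a x)"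
    by (auto simp: add.commute)
  show "\<theta> = \<rho> \<and> \<theta>' = \<rho>"
    using eq_rho_if_inj_on_compression[OF inj \<theta> t decomp]
      eq_rho_if_inj_on_compression[OF inj \<theta>(2,1) _ _ decomp'] t
    by simp
qed

end

theorem theorem4p4:
  fixes S :: "('a::complex_star_algebra \<Rightarrow> real) set"
    and n :: nat
    and \<rho> :: "nat \<Rightarrow> nat \<Rightarrow> 'a \<Rightarrow> ('h::chilbert_space \<Rightarrow> 'h)"
    and \<Phi> :: "'a \<Rightarrow> ('k::chilbert_space \<Rightarrow> 'k)"
    and V :: "nat \<Rightarrow> 'h \<Rightarrow> 'k"
  assumes "pro_cstar_algebra S"
    and "\<rho> \<in> CPn_I S n"
    and "stinespring_rep S n \<rho> \<Phi> V"
  shows "is_extreme_point (CPn_I S n) \<rho> \<longleftrightarrow>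
         inj_on (\<lambda>T. orth_proj (closure (cspan {V i \<xi> | i \<xi>. i < n})) \<circ> T \<circ>
                      orth_proj (closure (cspan {V i \<xi> | i \<xi>. i < n})))
                (commutant \<Phi>)"
proof -
  interpret stinespring_dilation S n \<rho> \<Phi> V
    using assms(2,3) by unfold_locales
  have "orth_proj (closure (cspan {V i \<xi> | i \<xi>. i < n})) = P"
    using orth_proj_H0 by (simp add: H0_def)
  then show ?thesis
    using inj_on_compression_if_extreme extreme_if_inj_on_compression by auto
qed

end
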